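(* Let $\alpha,\beta,\omega,\rho\in\mathbb{C}$ with $\mathrm{Re}(\alpha)>0$ and $\mathrm{Re}(\beta)>0$. Then for any $L^1$ function $f$ and any $\mu,\nu\in\mathbb{C}$ with $\mathrm{Re}(\nu\beta)>0$, $$\left(\mathcal{E}_{\alpha,\beta;c+}^{\omega,\rho}\right)^{\mu}\left(\mathcal{E}_{\alpha,\beta;c+}^{\omega,\rho}\right)^{\nu}f(x)=\left(\mathcal{E}_{\alpha,\beta;c+}^{\omega,\rho}\right)^{\mu+\nu}f(x).$$
   Context: The Prabhakar fractional integral is $\mathcal{E}_{\alpha,\beta;c+}^{\omega,\rho}f(x)=\int_c^x (x-t)^{\beta-1}E_{\alpha,\beta}^{\rho}[\omega(x-t)^{\alpha}]f(t)\,\mathrm{d}t$ for $\mathrm{Re}(\alpha),\mathrm{Re}(\beta)>0$, where $E_{\alpha,\beta}^{\rho}(z)=\sum_{n\ge0}\frac{(\rho)_n z^n}{\Gamma(\alpha n+\beta)n!}$ and $(\rho)_n=\Gamma(\rho+n)/\Gamma(\rho)$ is the Pochhammer symbol. For $\nu\in\mathbb{C}$, the $\nu$th iteration of the Prabhakar operator is defined by $$\left(\mathcal{E}_{\alpha,\beta;c+}^{\omega,\rho}\right)^{\nu}f(x)=\frac{\mathrm{d}^m}{\mathrm{d}x^m}\mathcal{E}_{\alpha,m+\nu\beta;c+}^{\omega,\nu\rho}f(x),\qquad m=\max\big(0,\lfloor\mathrm{Re}(-\nu\beta)\rfloor+1\big);$$ in particular, when $\mathrm{Re}(\nu\beta)>0$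 this is $\mathcal{E}_{\alpha,\nu\beta;c+}^{\omega,\nu\rho}f$. *)

theory Defs
  imports "HOL-Analysis.Analysis"
begin

text \<open>Three-parameter Mittag-Leffler (Prabhakar) function
  E^rho_{alpha,beta}(z) = sum_n (rho)_n z^n / (Gamma(alpha n + beta) n!).
  The reciprocal Gamma function rGamma = 1/Gamma is used (entire).\<close>
definition prab_ML :: "complex \<Rightarrow> complex \<Rightarrow> complex \<Rightarrow> complex \<Rightarrow> complex" where
  "prab_ML \<alpha> \<beta> \<rho> z =
     (\<Sum>n. pochhammer \<rho> n * z ^ n * rGamma (\<alpha> * of_nat n + \<beta>) / fact n)"

definition prab_int ::
  "complex \<Rightarrow> complex \<Rightarrow> complex \<Rightarrow> complex \<Rightarrow> real \<Rightarrow> (real \<Rightarrow> complex) \<Rightarrow> real \<Rightarrow> complex" where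
  "prab_int \<alpha> \<beta> \<omega> \<rho> c f x =
     (LINT t:{c..x}|lborel. (complex_of_real (x - t)) powr (\<beta> - 1)
        * prab_ML \<alpha> \<beta> \<rho> (\<omega> * (complex_of_real (x - t)) powr \<alpha>) * f t)"

definition prab_order :: "complex \<Rightarrow> complex \<Rightarrow> nat" where
  "prab_order \<nu> \<beta> = nat (\<lfloor>Re (- (\<nu> * \<beta>))\<rfloor> + 1)"

definition test_function :: "real \<Rightarrow> real \<Rightarrow> (real \<Rightarrow> real) \<Rightarrow> bool" where
  "test_function c d \<phi> \<longleftrightarrow>
     (\<forall>k x. ((deriv ^^ k) \<phi> has_real_derivative (deriv ^^ Suc k) \<phi> x) (at x)) \<and>
     (\<exists>a b. c < a \<and> a \<le> b \<and> b < d \<and> (\<forall>x. x \<notin> {a..b} \<longrightarrow> \<phi> x = 0))"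

text \<open>The nu-th iteration of the Prabhakar operator on (c,d),
  (d/dx)^m E^{omega, nu rho}_{alpha, m + nu beta; c+} f  with m = prab_order nu beta,
  where d/dx is the distributional derivative on (c,d): it is given by its
  action on test functions phi, namely (-1)^m int_c^d F(x) phi^(m)(x) dx.\<close>
definition prab_iter ::
  "complex \<Rightarrow> complex \<Rightarrow> complex \<Rightarrow> complex \<Rightarrow> real \<Rightarrow> real \<Rightarrow> complex \<Rightarrow> (real \<Rightarrow> complex)
     \<Rightarrow> (real \<Rightarrow> real) \<Rightarrow> complex" where
  "prab_iter \<alpha> \<beta> \<omega> \<rho> c d \<nu> f \<phi> =
     (let m = prab_order \<nu> \<beta> in
       (-1) ^ m * (LINT x:{c..d}|lborel.
          prab_int \<alpha> (of_nat m + \<nu> * \<beta>) \<omega> (\<nu> * \<rho>) c f x * complex_of_real ((deriv ^^ m) \<phi> x)))"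

end

theory Submission
  imports Defs
begin

text \<open>Fix \<open>\<alpha>\<close>, \<open>\<omega>\<close> and write \<open>E(\<gamma>, \<rho>)\<close> for the Prabhakar integral whose kernel is
  \<open>e(\<gamma>, \<rho>)(s) = s\<^sup>\<gamma>\<^sup>-\<^sup>1 E\<^sup>\<rho>\<^sub>\<alpha>\<^sub>,\<^sub>\<gamma>(\<omega> s\<^sup>\<alpha>)\<close>. Expanding two kernels in their power series, integrating
  the Cauchy product termwise with Euler's Beta integral and resumming with the Vandermonde identity
  for Pochhammer symbols gives the convolution identity \<open>e(\<gamma>\<^sub>1, \<rho>\<^sub>1) * e(\<gamma>\<^sub>2, \<rho>\<^sub>2) = e(\<gamma>\<^sub>1 + \<gamma>\<^sub>2, \<rho>\<^sub>1 + \<rho>\<^sub>2)\<close>;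
  by Fubini, \<open>E(\<gamma>\<^sub>1, \<rho>\<^sub>1) (E(\<gamma>\<^sub>2, \<rho>\<^sub>2) f) = E(\<gamma>\<^sub>1 + \<gamma>\<^sub>2, \<rho>\<^sub>1 + \<rho>\<^sub>2) f\<close> almost everywhere on \<open>[c, d]\<close>.

  The \<open>\<nu>\<close>-th iterate is the \<open>m\<close>-th distributional derivative of \<open>E(m + \<nu>\<beta>, \<nu>\<rho>) f\<close>, i.e. the
  pairing \<open>(-1)\<^sup>m \<langle>E(m + \<nu>\<beta>, \<nu>\<rho>) f, \<phi>\<^sup>(\<^sup>m\<^sup>)\<rangle>\<close>. As \<open>E(1, 0)\<close> is integration from \<open>c\<close>, the semigroup law
  and an integration by parts show that this pairing does not depend on \<open>m\<close> as long as
  \<open>Re (m + \<nu>\<beta>) > 0\<close>. On the left-hand side the semigroup law turns \<open>E(m + \<mu>\<beta>, \<mu>\<rho>) (E(\<nu>\<beta>, \<nu>\<rho>) f)\<close>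
  into \<open>E(m + (\<mu> + \<nu>)\<beta>, (\<mu> + \<nu>)\<rho>) f\<close>, and since \<open>Re (\<nu>\<beta>) > 0\<close> this \<open>m\<close> is admissible for \<open>\<mu> + \<nu>\<close>.\<close>

section \<open>Complex powers and Beta integrals\<close>

lemma measurable_of_real_powr [measurable]:
  "(\<lambda>u::real. complex_of_real u powr z) \<in> borel_measurable borel"
proof -
  have eq: "complex_of_real u powr z = (if u = 0 then 0 else
      exp (z * (of_real (ln \<bar>u\<bar>) + (if u < 0 then \<i> * of_real pi else 0))))" for u
  proof (cases "u < 0")
    case True
    have "Ln (complex_of_real u) = of_real (ln \<bar>u\<bar>) + \<i> * of_real pi"
      by (rule Ln_unique) (use True in \<open>auto simp: exp_add exp_of_real\<close>)
    with True show ?thesis by (simp add: powr_def)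
  qed (auto simp: powr_def Ln_of_real)
  show ?thesis
    unfolding eq by measurable
qed

lemma norm_of_real_powr [simp]: "t \<ge> 0 \<Longrightarrow> norm (complex_of_real t powr z) = t powr Re z"
  by (subst norm_powr_real_powr) auto

lemma norm_of_real_diff_powr [simp]:
  "x \<le> v \<Longrightarrow> norm ((complex_of_real v - of_real x) powr z) = (v - x) powr Re z"
  using norm_of_real_powr[of "v - x" z] by simp

lemma of_real_mult_powr:
  "0 \<le> x \<Longrightarrow> 0 \<le> y \<Longrightarrow> complex_of_real (x * y) powr z = of_real x powr z * of_real y powr z"
  by (subst of_real_mult, rule powr_times_real) auto

lemma of_real_powr_power:
  "s > 0 \<Longrightarrow> (complex_of_real s powr a) ^ n = of_real s powr (of_nat n * a)"
  by (simp add: powr_def exp_of_nat_mult[symmetric] mult_ac)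

lemma Beta_real_pos: "a > 0 \<Longrightarrow> b > 0 \<Longrightarrow> Beta a b > (0::real)"
  by (simp add: Beta_def Gamma_real_pos)

lemma Re_pos_not_nonpos_Ints: "Re z > 0 \<Longrightarrow> z \<notin> \<int>\<^sub>\<le>\<^sub>0"
  by (auto elim!: nonpos_Ints_cases)

lemma rGamma_add_eq_Beta:
  assumes "Re w > 0" "Re a > 0"
  shows "rGamma (w + a) = rGamma w * rGamma a * Beta w a"
proof -
  have "Gamma w \<noteq> 0" "Gamma a \<noteq> 0"
    using assms by (auto intro!: Gamma_nonzero Re_pos_not_nonpos_Ints)
  then show ?thesis by (simp add: Beta_altdef rGamma_inverse_Gamma field_simps)
qed

lemma nn_integral_Beta_real:
  fixes a b s :: real
  assumes a: "a > 0" and b: "b > 0" and s: "s > 0"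
  shows "(\<integral>\<^sup>+t. ennreal (indicator {0..s} t * t powr (a - 1) * (s - t) powr (b - 1)) \<partial>lborel)
     = ennreal (Beta a b * s powr (a + b - 1))"
proof -
  have "(\<integral>\<^sup>+t. ennreal (indicator {0..s} t * t powr (a - 1) * (s - t) powr (b - 1)) \<partial>lborel)
      = (\<integral>\<^sup>+t. ennreal (indicator {0..1} t * (s * t) powr (a - 1) * (s - s * t) powr (b - 1))
           \<partial>distr lborel borel ((*) (1 / s)))" (is "_ = nn_integral _ ?f")
    using s by (subst nn_integral_distr) (auto simp: indicator_def field_simps intro!: nn_integral_cong)
  also have "distr lborel borel ((*) (1 / s)) = density lborel (\<lambda>_. s)"
    using s by (subst lborel_distr_mult) auto
  also have "nn_integral \<dots> ?f = (\<integral>\<^sup>+t. ennreal (indicator {0..1} t *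
      (s * (s * t) powr (a - 1) * (s * (1 - t)) powr (b - 1))) \<partial>lborel)"
    using s by (subst nn_integral_density) (auto simp: ennreal_mult'[symmetric] algebra_simps)
  also have "\<dots> = (\<integral>\<^sup>+t. ennreal (s powr (a + b - 1)) *
      ennreal (indicator {0..1} t * t powr (a - 1) * (1 - t) powr (b - 1)) \<partial>lborel)"
    using s a b
    by (intro nn_integral_cong)
       (auto simp: indicator_def powr_mult powr_add powr_diff mult_ac ennreal_mult'[symmetric])
  also have "\<dots> = ennreal (s powr (a + b - 1)) *
      (\<integral>\<^sup>+t. ennreal (indicator {0..1} t * t powr (a - 1) * (1 - t) powr (b - 1)) \<partial>lborel)"
    by (subst nn_integral_cmult) auto
  also have "(\<integral>\<^sup>+t. ennreal (indicator {0..1} t * t powr (a - 1) * (1 - t) powr (b - 1)) \<partial>lborel)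
      = ennreal (Beta a b)"
    using nn_integral_has_integral_lebesgue[OF _ has_integral_Beta_real[OF a b]] a b
    by (simp add: mult_ac)
  finally show ?thesis
    using s Beta_real_pos[OF a b] by (simp add: ennreal_mult[symmetric] mult_ac)
qed

lemma nn_integral_Beta_real_interval:
  fixes p q u x :: real
  assumes p: "p > 0" and q: "q > 0" and ux: "u \<le> x"
  shows "(\<integral>\<^sup>+t. ennreal (indicator {u..x} t * ((x - t) powr (p - 1) * (t - u) powr (q - 1))) \<partial>lborel)
     = ennreal (Beta p q * (x - u) powr (p + q - 1))"
proof (cases "u = x")
  case True
  then have "(\<lambda>t. ennreal (indicator {u..x} t * ((x - t) powr (p - 1) * (t - u) powr (q - 1)))) = (\<lambda>t. 0)"
    by (auto simp: indicator_def fun_eq_iff)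
  with True show ?thesis by simp
next
  case False
  with ux have s: "x - u > 0" by simp
  have "(\<integral>\<^sup>+t. ennreal (indicator {u..x} t * ((x - t) powr (p - 1) * (t - u) powr (q - 1))) \<partial>lborel)
      = (\<integral>\<^sup>+v. ennreal (indicator {u..x} (u + v) * ((x - (u + v)) powr (p - 1) * ((u + v) - u) powr (q - 1))) \<partial>lborel)"
    by (rule nn_integral_real_affine[where c=1 and t=u, simplified]) measurable
  also have "\<dots> = (\<integral>\<^sup>+v. ennreal (indicator {0..x - u} v * v powr (q - 1) * ((x - u) - v) powr (p - 1)) \<partial>lborel)"
    by (intro nn_integral_cong) (auto simp: indicator_def algebra_simps)
  also have "\<dots> = ennreal (Beta p q * (x - u) powr (p + q - 1))"
    using nn_integral_Beta_real[OF q p s] by (simp add: Beta_commute add.commute)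
  finally show ?thesis .
qed

lemma lborel_integral_Gamma:
  assumes "Re z > 0"
  shows "(\<integral>t. indicator {0..} t *\<^sub>R (complex_of_real t powr (z - 1) / of_real (exp t)) \<partial>lborel) = Gamma z"
proof -
  have "(\<integral>\<^sup>+t. ennreal (norm (indicator {0..} t *\<^sub>R (complex_of_real t powr (z - 1) / of_real (exp t)))) \<partial>lborel)
      = (\<integral>\<^sup>+t. ennreal (indicator {0..} t * t powr (Re z - 1) / exp t) \<partial>lborel)"
    by (intro nn_integral_cong) (auto simp: indicator_def norm_divide)
  also have "\<dots> = Gamma (Re z)"
    using assms by (simp add: Gamma_conv_nn_integral_real)
  finally have "(\<integral>\<^sup>+t. ennreal (norm (indicator {0..} t *\<^sub>R
      (complex_of_real t powr (z - 1) / of_real (exp t)))) \<partial>lborel) < \<infinity>"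
    by simp
  then have "set_integrable lborel {0..} (\<lambda>t. complex_of_real t powr (z - 1) / of_real (exp t))"
    unfolding set_integrable_def by (intro integrableI_bounded) measurable
  from set_borel_integral_eq_integral(2)[OF this] Gamma_integral_complex[OF assms]
  show ?thesis
    by (simp add: set_lebesgue_integral_def integral_unique)
qed

lemma lborel_integral_Gamma_shift:
  assumes "Re b > 0"
  shows "(\<integral>v. indicator {t..} v *\<^sub>R (complex_of_real (v - t) powr (b - 1) / of_real (exp v)) \<partial>lborel)
       = Gamma b / of_real (exp t)"
proof -
  have "(\<integral>v. indicator {t..} v *\<^sub>R (complex_of_real (v - t) powr (b - 1) / of_real (exp v)) \<partial>lborel)
      = (\<integral>w. indicator {t..} (t + w) *\<^sub>R (complex_of_real ((t + w) - t) powr (b - 1) / of_real (exp (t + w))) \<partial>lborel)"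
    using lborel_integral_real_affine[of 1 "\<lambda>v. indicator {t..} v *\<^sub>R
        (complex_of_real (v - t) powr (b - 1) / of_real (exp v))" t]
    by simp
  also have "\<dots> = (\<integral>w. indicator {0..} w *\<^sub>R (complex_of_real w powr (b - 1) / of_real (exp w)) \<partial>lborel) / of_real (exp t)"
    unfolding integral_divide_zero[symmetric]
    by (intro Bochner_Integration.integral_cong) (auto simp: indicator_def exp_add)
  finally show ?thesis
    using lborel_integral_Gamma[OF assms] by simp
qed

lemma lborel_integral_Beta_scale:
  assumes "s > 0"
  shows "(\<integral>u. indicator {0..s} u *\<^sub>R (complex_of_real u powr (a - 1) * of_real (s - u) powr (b - 1)) \<partial>lborel)
       = of_real s powr (a + b - 1) *
         (\<integral>u. indicator {0..1} u *\<^sub>R (complex_of_real u powr (a - 1) * of_real (1 - u) powr (b - 1)) \<partial>lborel)"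
proof -
  define F where "F u = indicator {0..s} u *\<^sub>R (complex_of_real u powr (a - 1) * of_real (s - u) powr (b - 1))" for u
  define g where "g u = indicator {0..1} u *\<^sub>R (complex_of_real u powr (a - 1) * of_real (1 - u) powr (b - 1))" for u
  have scale: "F (s * x) = (of_real s powr (a - 1) * of_real s powr (b - 1)) * g x" for x
  proof (cases "x \<in> {0..1}")
    case True
    have "s - s * x = s * (1 - x)" by (simp add: algebra_simps)
    moreover have "s * x \<in> {0..s}"
      using True assms by (auto simp: mult_le_cancel_left1)
    ultimately show ?thesis
      using True assms
      by (simp add: F_def g_def of_real_mult_powr mult_ac del: of_real_mult of_real_diff)
  next
    case False
    with assms have "s * x \<notin> {0..s}"
      by (auto simp: zero_le_mult_iff mult_le_cancel_left1)
    with False show ?thesis by (simp add: F_def g_def)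
  qed
  have "integral\<^sup>L lborel F = s *\<^sub>R (\<integral>x. (of_real s powr (a - 1) * of_real s powr (b - 1)) * g x \<partial>lborel)"
    using lborel_integral_real_affine[of s F 0] assms by (simp add: scale)
  also have "\<dots> = (of_real s * of_real s powr (a - 1) * of_real s powr (b - 1)) * integral\<^sup>L lborel g"
    by (simp add: scaleR_conv_of_real mult_ac)
  also have "of_real s * of_real s powr (a - 1) * of_real s powr (b - 1) = complex_of_real s powr (a + b - 1)"
  proof -
    have "complex_of_real s powr (a + b - 1) = of_real s powr (1 + (a - 1) + (b - 1))"
      by (simp add: algebra_simps)
    also have "\<dots> = of_real s powr 1 * of_real s powr (a - 1) * of_real s powr (b - 1)"
      by (simp only: powr_add)
    finally show ?thesis using assms by simp
  qed
  finally show ?thesis by (simp add: F_def g_def)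
qed

lemma integrable_Beta_Gamma_integrand:
  assumes a: "Re a > 0" and b: "Re b > 0"
  shows "integrable (lborel \<Otimes>\<^sub>M lborel) (\<lambda>(t, v). if 0 \<le> t \<and> t \<le> v then
           complex_of_real t powr (a - 1) * of_real (v - t) powr (b - 1) / of_real (exp v) else 0)"
    (is "integrable _ ?f")
proof (rule integrableI_bounded)
  show "?f \<in> borel_measurable (lborel \<Otimes>\<^sub>M lborel)"
    by measurable
  have inner: "(\<integral>\<^sup>+t. ennreal (norm (?f (t, v))) \<partial>lborel) =
      ennreal (Beta (Re a) (Re b)) * ennreal (indicator {0..} v * v powr (Re a + Re b - 1) / exp v)"
    if "v \<noteq> 0" for v
  proof (cases "v > 0")
    case True
    have "(\<integral>\<^sup>+t. ennreal (norm (?f (t, v))) \<partial>lborel) = (\<integral>\<^sup>+t. ennreal (indicator {0..v} t *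
        t powr (Re a - 1) * (v - t) powr (Re b - 1)) * ennreal (1 / exp v) \<partial>lborel)"
      by (intro nn_integral_cong)
         (auto simp: indicator_def norm_divide norm_mult ennreal_mult'[symmetric])
    also have "\<dots> = ennreal (Beta (Re a) (Re b) * v powr (Re a + Re b - 1)) * ennreal (1 / exp v)"
      using a b True by (simp add: nn_integral_multc nn_integral_Beta_real)
    finally show ?thesis
      using True a b by (simp add: ennreal_mult[symmetric] Beta_real_pos less_imp_le)
  next
    case False
    then have "\<And>t. ?f (t, v) = 0" by auto
    with False that show ?thesis by (simp add: indicator_def)
  qed
  have "(\<integral>\<^sup>+p. ennreal (norm (?f p)) \<partial>(lborel \<Otimes>\<^sub>M lborel)) =
      (\<integral>\<^sup>+v. (\<integral>\<^sup>+t. ennreal (norm (?f (t, v))) \<partial>lborel) \<partial>lborel)"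
    by (subst lborel_pair.nn_integral_snd) auto
  also have "\<dots> = (\<integral>\<^sup>+v. ennreal (Beta (Re a) (Re b)) *
      ennreal (indicator {0..} v * v powr (Re a + Re b - 1) / exp v) \<partial>lborel)"
    by (intro nn_integral_cong_AE eventually_mono[OF AE_lborel_singleton[of 0]] inner)
  also have "\<dots> = ennreal (Beta (Re a) (Re b)) * ennreal (Gamma (Re a + Re b))"
    using a b by (subst nn_integral_cmult) (auto simp: Gamma_conv_nn_integral_real)
  finally show "(\<integral>\<^sup>+p. ennreal (norm (?f p)) \<partial>(lborel \<Otimes>\<^sub>M lborel)) < \<infinity>"
    by (simp add: ennreal_mult_less_top)
qed

text \<open>Write \<open>\<Gamma>(a)\<Gamma>(b)\<close> as a double integral over \<open>0 \<le> t \<le> v\<close>; integrating first in \<open>t\<close>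
  gives \<open>\<Gamma>(a + b) B(a, b)\<close>.\<close>
lemma lborel_integral_Beta:
  assumes a: "Re a > 0" and b: "Re b > 0"
  shows "(\<integral>u. indicator {0..1} u *\<^sub>R (complex_of_real u powr (a - 1) * of_real (1 - u) powr (b - 1)) \<partial>lborel)
       = Beta a b" (is "?J = _")
proof -
  define f where "f = (\<lambda>(t, v). if 0 \<le> t \<and> t \<le> v then
      complex_of_real t powr (a - 1) * of_real (v - t) powr (b - 1) / of_real (exp v) else 0)"
  have inner_t: "(\<integral>t. f (t, v) \<partial>lborel) =
      indicator {0..} v *\<^sub>R (complex_of_real v powr (a + b - 1) / of_real (exp v)) * ?J" for v
  proof (cases "v > 0")
    case True
    have "(\<integral>t. f (t, v) \<partial>lborel) = (\<integral>t. indicator {0..v} t *\<^sub>R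
        (complex_of_real t powr (a - 1) * of_real (v - t) powr (b - 1)) \<partial>lborel) / of_real (exp v)"
      unfolding integral_divide_zero[symmetric] f_def
      by (intro Bochner_Integration.integral_cong) (auto simp: indicator_def)
    also have "\<dots> = complex_of_real v powr (a + b - 1) * ?J / of_real (exp v)"
      by (simp only: lborel_integral_Beta_scale[OF True])
    finally show ?thesis
      using True by (simp add: indicator_def)
  next
    case False
    then have "\<And>t. f (t, v) = 0" unfolding f_def by auto
    with False show ?thesis by (auto simp: indicator_def)
  qed
  have inner_v: "(\<integral>v. f (t, v) \<partial>lborel) =
      Gamma b * (indicator {0..} t *\<^sub>R (complex_of_real t powr (a - 1) / of_real (exp t)))" for t
  proof -
    have "f (t, v) = (indicator {0..} t *\<^sub>R complex_of_real t powr (a - 1)) *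
        (indicator {t..} v *\<^sub>R (complex_of_real (v - t) powr (b - 1) / of_real (exp v)))" for v
      by (auto simp: f_def indicator_def)
    then show ?thesis
      by (simp only: integral_mult_right_zero lborel_integral_Gamma_shift[OF b])
         (simp add: indicator_def)
  qed
  have "Gamma (a + b) * ?J = (\<integral>v. (\<integral>t. f (t, v) \<partial>lborel) \<partial>lborel)"
    unfolding inner_t
    by (subst integral_mult_left_zero) (use lborel_integral_Gamma[of "a + b"] a b in simp)
  also have "\<dots> = (\<integral>t. (\<integral>v. f (t, v) \<partial>lborel) \<partial>lborel)"
  proof -
    have "integrable (lborel \<Otimes>\<^sub>M lborel) f"
      unfolding f_def by (rule integrable_Beta_Gamma_integrand[OF a b])
    then show ?thesis
      using lborel_pair.Fubini_integral[of "\<lambda>t v. f (t, v)"] by simp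
  qed
  also have "\<dots> = Gamma a * Gamma b"
    unfolding inner_v integral_mult_right_zero lborel_integral_Gamma[OF a] by simp
  finally have "Gamma (a + b) * ?J = Gamma a * Gamma b" .
  moreover have "Gamma (a + b) \<noteq> 0"
    using a b by (intro Gamma_nonzero Re_pos_not_nonpos_Ints) simp
  ultimately show ?thesis by (simp add: Beta_def field_simps)
qed

lemma norm_Beta_le:
  assumes a: "Re a > 0" and b: "Re b > 0"
  shows "norm (Beta a b) \<le> Beta (Re a) (Re b)"
proof -
  let ?g = "\<lambda>u. indicator {0..1} u *\<^sub>R (complex_of_real u powr (a - 1) * of_real (1 - u) powr (b - 1))"
  have "(\<integral>\<^sup>+u. ennreal (norm (?g u)) \<partial>lborel)
      = (\<integral>\<^sup>+u. ennreal (indicator {0..1} u * u powr (Re a - 1) * (1 - u) powr (Re b - 1)) \<partial>lborel)"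
    by (intro nn_integral_cong) (auto simp: indicator_def norm_mult simp del: of_real_diff)
  also have "\<dots> = ennreal (Beta (Re a) (Re b))"
    using nn_integral_Beta_real[of "Re a" "Re b" 1] a b by simp
  finally have nn: "(\<integral>\<^sup>+u. ennreal (norm (?g u)) \<partial>lborel) = ennreal (Beta (Re a) (Re b))" .
  have "integrable lborel ?g"
    by (rule integrableI_bounded) (measurable, simp only: nn, simp)
  then have "ennreal (norm (Beta a b)) \<le> (\<integral>\<^sup>+u. ennreal (norm (?g u)) \<partial>lborel)"
    unfolding lborel_integral_Beta[OF a b, symmetric] by (rule integral_norm_bound_ennreal)
  with nn show ?thesis
    using Beta_real_pos[OF a b] by (simp add: ennreal_le_iff)
qed

lemma
  fixes p q s :: real
  assumes p: "p > 0" and q: "q > 0" and s: "s > 0"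
  shows integrable_Beta_real_convolution:
      "integrable lborel (\<lambda>u. indicator {0..s} u * ((s - u) powr (p - 1) * u powr (q - 1)))"
    and lborel_integral_Beta_real_convolution:
      "(\<integral>u. indicator {0..s} u * ((s - u) powr (p - 1) * u powr (q - 1)) \<partial>lborel) = Beta p q * s powr (p + q - 1)"
proof -
  have "(\<integral>\<^sup>+u. ennreal (indicator {0..s} u * ((s - u) powr (p - 1) * u powr (q - 1))) \<partial>lborel)
      = ennreal (Beta p q * s powr (p + q - 1))"
    using nn_integral_Beta_real[OF q p s] by (simp add: mult_ac Beta_commute add.commute)
  then have "integrable lborel (\<lambda>u. indicator {0..s} u * ((s - u) powr (p - 1) * u powr (q - 1))) \<and>
      (\<integral>u. indicator {0..s} u * ((s - u) powr (p - 1) * u powr (q - 1)) \<partial>lborel) = Beta p q * s powr (p + q - 1)"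
    by (subst nn_integral_eq_integrable[symmetric])
       (use Beta_real_pos[OF p q] in \<open>auto intro!: AE_I2 simp: indicator_def\<close>)
  then show "integrable lborel (\<lambda>u. indicator {0..s} u * ((s - u) powr (p - 1) * u powr (q - 1)))"
    and "(\<integral>u. indicator {0..s} u * ((s - u) powr (p - 1) * u powr (q - 1)) \<partial>lborel) = Beta p q * s powr (p + q - 1)"
    by auto
qed

lemma
  assumes p: "Re p > 0" and q: "Re q > 0" and s: "s > 0"
  shows integrable_Beta_convolution:
      "integrable lborel (\<lambda>u. indicator {0..s} u *\<^sub>R (complex_of_real (s - u) powr (p - 1) * of_real u powr (q - 1)))"
    and lborel_integral_Beta_convolution:
      "(\<integral>u. indicator {0..s} u *\<^sub>R (complex_of_real (s - u) powr (p - 1) * of_real u powr (q - 1)) \<partial>lborel)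
         = Beta p q * of_real s powr (p + q - 1)"
proof -
  show "integrable lborel (\<lambda>u. indicator {0..s} u *\<^sub>R (complex_of_real (s - u) powr (p - 1) * of_real u powr (q - 1)))"
    by (rule Bochner_Integration.integrable_bound[OF integrable_Beta_real_convolution[OF p q s]])
       (measurable, auto intro!: AE_I2 simp: indicator_def norm_mult)
  have "(\<integral>u. indicator {0..s} u *\<^sub>R (complex_of_real (s - u) powr (p - 1) * of_real u powr (q - 1)) \<partial>lborel)
      = (\<integral>u. indicator {0..s} u *\<^sub>R (complex_of_real u powr (q - 1) * of_real (s - u) powr (p - 1)) \<partial>lborel)"
    by (simp add: mult.commute)
  also have "\<dots> = of_real s powr (q + p - 1) * Beta q p"
    by (simp only: lborel_integral_Beta_scale[OF s] lborel_integral_Beta[OF q p])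
  finally show "(\<integral>u. indicator {0..s} u *\<^sub>R (complex_of_real (s - u) powr (p - 1) * of_real u powr (q - 1)) \<partial>lborel)
      = Beta p q * of_real s powr (p + q - 1)"
    by (simp add: Beta_commute add.commute mult.commute)
qed

text \<open>Log-convexity of \<open>\<Gamma>\<close> between \<open>x + a\<close> and \<open>x + a + 1\<close> (Gautschi's inequality).\<close>
lemma Beta_real_le:
  fixes x a :: real
  assumes "x > 0" "0 < a" "a < 1"
  shows "Beta x a \<le> Gamma a * (x + a) powr (1 - a) / x"
proof -
  have "(ln \<circ> Gamma) ((1 - (1 - a)) *\<^sub>R (x + a) + (1 - a) *\<^sub>R (x + a + 1))
      \<le> (1 - (1 - a)) * (ln \<circ> Gamma) (x + a) + (1 - a) * (ln \<circ> Gamma) (x + a + 1)"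
    by (rule convex_onD[OF log_convex_Gamma_real]) (use assms in auto)
  moreover have "(1 - (1 - a)) *\<^sub>R (x + a) + (1 - a) *\<^sub>R (x + a + 1) = x + 1"
    by (simp add: algebra_simps)
  moreover have "Gamma (x + a + 1) = (x + a) * Gamma (x + a)"
    using Gamma_plus1[of "x + a"] assms by (auto simp: nonpos_Ints_def)
  moreover have "Gamma (x + a) > 0"
    using assms by simp
  ultimately have "ln (Gamma (x + 1)) \<le> a * ln (Gamma (x + a)) + (1 - a) * (ln (x + a) + ln (Gamma (x + a)))"
    using assms by (simp add: ln_mult)
  also have "\<dots> = ln (Gamma (x + a)) + (1 - a) * ln (x + a)"
    by (simp add: algebra_simps)
  finally have "exp (ln (Gamma (x + 1))) \<le> exp (ln (Gamma (x + a)) + (1 - a) * ln (x + a))"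
    by simp
  then have "Gamma (x + 1) \<le> Gamma (x + a) * (x + a) powr (1 - a)"
    using assms by (simp add: exp_add powr_def mult_ac)
  moreover have "Gamma (x + 1) = x * Gamma x"
    using Gamma_plus1[of x] assms by (auto simp: nonpos_Ints_def)
  ultimately have "x * Gamma x \<le> Gamma (x + a) * (x + a) powr (1 - a)"
    by simp
  then show ?thesis
    using assms by (simp add: Beta_def field_simps)
qed

lemma Beta_real_tendsto_0_at_top:
  fixes a :: real
  assumes "a > 0"
  shows "((\<lambda>x. Beta x a) \<longlongrightarrow> 0) at_top"
proof -
  define a' where "a' = min a (1/2)"
  have a': "0 < a'" "a' < 1" "a' \<le> a"
    using assms by (auto simp: a'_def)
  have bound: "eventually (\<lambda>x. 0 \<le> Beta x a \<and> Beta x a \<le> Gamma a' * 2 powr (1 - a') * x powr (- a')) at_top"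
    using eventually_ge_at_top[of "1::real"]
  proof eventually_elim
    case (elim x)
    have "Beta x a \<le> Beta x a'"
      using a' elim by (intro Beta_real_mono) auto
    also have "\<dots> \<le> Gamma a' * (x + a') powr (1 - a') / x"
      using a' elim by (intro Beta_real_le) auto
    also have "\<dots> \<le> Gamma a' * (2 * x) powr (1 - a') / x"
      using a' elim by (intro divide_right_mono mult_left_mono powr_mono2) auto
    also have "\<dots> = Gamma a' * 2 powr (1 - a') * x powr (- a')"
      using elim by (simp add: powr_mult powr_diff powr_minus field_simps)
    finally show ?case
      using Beta_real_pos[of x a] elim assms by simp
  qed
  have "((\<lambda>x. Gamma a' * 2 powr (1 - a') * x powr (- a')) \<longlongrightarrow> 0) at_top"
    using a' tendsto_mult_right_zero[OF tendsto_neg_powr[OF _ filterlim_ident]] by simp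
  then show ?thesis
    by (rule tendsto_sandwich[rotated 2, OF tendsto_const]) (use bound in \<open>auto elim: eventually_mono\<close>)
qed

section \<open>The Prabhakar function and its kernel\<close>

definition prab_coeff :: "complex \<Rightarrow> complex \<Rightarrow> complex \<Rightarrow> nat \<Rightarrow> complex" where
  "prab_coeff \<alpha> \<beta> \<rho> n = pochhammer \<rho> n * rGamma (\<alpha> * of_nat n + \<beta>) / fact n"

lemma prab_ML_eq_suminf: "prab_ML \<alpha> \<beta> \<rho> z = (\<Sum>n. prab_coeff \<alpha> \<beta> \<rho> n * z ^ n)"
  by (simp add: prab_ML_def prab_coeff_def mult_ac)

lemma norm_prab_coeff_Suc_le:
  assumes \<alpha>: "Re \<alpha> > 0" and \<beta>: "Re \<beta> > 0"
  shows "norm (prab_coeff \<alpha> \<beta> \<rho> (Suc n)) \<le>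
    (norm \<rho> + 1) * norm (rGamma \<alpha>) * Beta (real n * Re \<alpha> + Re \<beta>) (Re \<alpha>) * norm (prab_coeff \<alpha> \<beta> \<rho> n)"
proof -
  define w where "w = \<alpha> * of_nat n + \<beta>"
  have w: "Re w > 0" "Re w = real n * Re \<alpha> + Re \<beta>"
    using \<alpha> \<beta> by (auto simp: w_def intro!: add_nonneg_pos)
  have "rGamma (\<alpha> * of_nat (Suc n) + \<beta>) = rGamma (w + \<alpha>)"
    by (simp add: w_def algebra_simps)
  also have "\<dots> = rGamma w * rGamma \<alpha> * Beta w \<alpha>"
    by (rule rGamma_add_eq_Beta[OF w(1) \<alpha>])
  finally have "norm (prab_coeff \<alpha> \<beta> \<rho> (Suc n)) =
      norm ((\<rho> + of_nat n) / of_nat (Suc n)) * norm (rGamma \<alpha>) * norm (Beta w \<alpha>) * norm (prab_coeff \<alpha> \<beta> \<rho> n)"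
    unfolding prab_coeff_def
    by (simp only:) (simp add: w_def pochhammer_Suc fact_Suc norm_mult norm_divide mult_ac)
  also have "\<dots> \<le> (norm \<rho> + 1) * norm (rGamma \<alpha>) * Beta (real n * Re \<alpha> + Re \<beta>) (Re \<alpha>) * norm (prab_coeff \<alpha> \<beta> \<rho> n)"
  proof (intro mult_right_mono mult_mono)
    have "norm (\<rho> + of_nat n) \<le> norm \<rho> + real n"
      using norm_triangle_ineq[of \<rho> "of_nat n"] by simp
    also have "\<dots> \<le> (norm \<rho> + 1) * real (Suc n)"
      by (simp add: algebra_simps)
    finally show "norm ((\<rho> + of_nat n) / (of_nat (Suc n) :: complex)) \<le> norm \<rho> + 1"
      by (simp add: norm_divide divide_le_eq del: of_nat_Suc)
    show "norm (Beta w \<alpha>) \<le> Beta (real n * Re \<alpha> + Re \<beta>) (Re \<alpha>)"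
      using norm_Beta_le[OF w(1) \<alpha>] by (simp add: w(2))
  qed auto
  finally show ?thesis .
qed

text \<open>The ratio of consecutive coefficients is \<open>O(B(n Re \<alpha> + Re \<beta>, Re \<alpha>))\<close>, which tends to \<open>0\<close>;
  so \<open>E\<^sup>\<rho>\<^sub>\<alpha>\<^sub>,\<^sub>\<beta>\<close> is entire.\<close>
lemma summable_norm_prab_coeff:
  assumes \<alpha>: "Re \<alpha> > 0" and \<beta>: "Re \<beta> > 0" and r: "r \<ge> 0"
  shows "summable (\<lambda>n. norm (prab_coeff \<alpha> \<beta> \<rho> n) * r ^ n)"
proof -
  define C where "C = (norm \<rho> + 1) * r * norm (rGamma \<alpha>)"
  have "filterlim (\<lambda>n. Re \<beta> + Re \<alpha> * real n) at_top sequentially"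
    by (intro filterlim_tendsto_add_at_top[OF tendsto_const]
        filterlim_tendsto_pos_mult_at_top[OF tendsto_const \<alpha>] filterlim_real_sequentially)
  then have "filterlim (\<lambda>n. real n * Re \<alpha> + Re \<beta>) at_top sequentially"
    by (simp add: add.commute mult.commute)
  from filterlim_compose[OF Beta_real_tendsto_0_at_top[OF \<alpha>] this]
  have "((\<lambda>n. C * Beta (real n * Re \<alpha> + Re \<beta>) (Re \<alpha>)) \<longlongrightarrow> C * 0) sequentially"
    by (intro tendsto_intros)
  then have "eventually (\<lambda>n. C * Beta (real n * Re \<alpha> + Re \<beta>) (Re \<alpha>) < 1/2) sequentially"
    by (intro order_tendstoD) auto
  then obtain N where N: "\<And>n. n \<ge> N \<Longrightarrow> C * Beta (real n * Re \<alpha> + Re \<beta>) (Re \<alpha>) < 1/2"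
    by (auto simp: eventually_sequentially)
  show ?thesis
  proof (rule summable_ratio_test[of "1/2" N])
    fix n assume "n \<ge> N"
    have "norm (prab_coeff \<alpha> \<beta> \<rho> (Suc n)) * r ^ Suc n \<le>
        (C * Beta (real n * Re \<alpha> + Re \<beta>) (Re \<alpha>)) * (norm (prab_coeff \<alpha> \<beta> \<rho> n) * r ^ n)"
      using mult_right_mono[OF norm_prab_coeff_Suc_le[OF \<alpha> \<beta>, of \<rho> n], of "r ^ Suc n"] r
      by (simp add: C_def mult_ac)
    also have "\<dots> \<le> 1/2 * (norm (prab_coeff \<alpha> \<beta> \<rho> n) * r ^ n)"
      using N[OF \<open>n \<ge> N\<close>] r by (intro mult_right_mono) auto
    finally show "norm (norm (prab_coeff \<alpha> \<beta> \<rho> (Suc n)) * r ^ Suc n)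
        \<le> 1/2 * norm (norm (prab_coeff \<alpha> \<beta> \<rho> n) * r ^ n)"
      using r by simp
  qed simp
qed

lemma summable_norm_prab_ML_series:
  assumes "Re \<alpha> > 0" "Re \<beta> > 0"
  shows "summable (\<lambda>n. norm (prab_coeff \<alpha> \<beta> \<rho> n * z ^ n))"
  using summable_norm_prab_coeff[OF assms, of "norm z" \<rho>] by (simp add: norm_mult norm_power)

lemma isCont_prab_ML:
  assumes "Re \<alpha> > 0" "Re \<beta> > 0"
  shows "isCont (prab_ML \<alpha> \<beta> \<rho>) z"
proof -
  have "summable (\<lambda>n. prab_coeff \<alpha> \<beta> \<rho> n * of_real (norm z + 1) ^ n)"
    by (rule summable_norm_cancel[OF summable_norm_prab_ML_series[OF assms]])
  then have "isCont (\<lambda>z. \<Sum>n. prab_coeff \<alpha> \<beta> \<rho> n * z ^ n) z"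
    by (rule isCont_powser) simp
  then show ?thesis
    by (simp add: prab_ML_eq_suminf[abs_def])
qed

lemma measurable_prab_ML [measurable]:
  assumes "Re \<alpha> > 0" "Re \<beta> > 0"
  shows "prab_ML \<alpha> \<beta> \<rho> \<in> borel_measurable borel"
  using isCont_prab_ML[OF assms]
  by (intro borel_measurable_continuous_onI continuous_at_imp_continuous_on) auto

lemma norm_prab_ML_le:
  assumes "Re \<alpha> > 0" "Re \<beta> > 0" "norm z \<le> R"
  shows "norm (prab_ML \<alpha> \<beta> \<rho> z) \<le> (\<Sum>n. norm (prab_coeff \<alpha> \<beta> \<rho> n) * R ^ n)"
proof -
  have "R \<ge> 0"
    using assms(3) norm_ge_zero order_trans by blast
  have "norm (prab_ML \<alpha> \<beta> \<rho> z) \<le> (\<Sum>n. norm (prab_coeff \<alpha> \<beta> \<rho> n * z ^ n))"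
    unfolding prab_ML_eq_suminf by (rule summable_norm[OF summable_norm_prab_ML_series[OF assms(1,2)]])
  also have "\<dots> \<le> (\<Sum>n. norm (prab_coeff \<alpha> \<beta> \<rho> n) * R ^ n)"
    using summable_norm_prab_ML_series[OF assms(1,2)] summable_norm_prab_coeff[OF assms(1,2) \<open>R \<ge> 0\<close>]
    by (intro suminf_le) (auto simp: norm_mult norm_power intro!: mult_left_mono power_mono assms(3))
  finally show ?thesis .
qed

definition prab_kernel :: "complex \<Rightarrow> complex \<Rightarrow> complex \<Rightarrow> complex \<Rightarrow> real \<Rightarrow> complex" where
  "prab_kernel \<alpha> \<gamma> \<omega> \<rho> s =
     (if s > 0 then complex_of_real s powr (\<gamma> - 1) * prab_ML \<alpha> \<gamma> \<rho> (\<omega> * of_real s powr \<alpha>) else 0)"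

lemma prab_kernel_nonpos [simp]: "s \<le> 0 \<Longrightarrow> prab_kernel \<alpha> \<gamma> \<omega> \<rho> s = 0"
  by (simp add: prab_kernel_def)

lemma measurable_prab_kernel [measurable]:
  assumes "Re \<alpha> > 0" "Re \<gamma> > 0"
  shows "prab_kernel \<alpha> \<gamma> \<omega> \<rho> \<in> borel_measurable borel"
proof -
  note measurable_prab_ML[OF assms, measurable]
  show ?thesis
    unfolding prab_kernel_def[abs_def] by measurable
qed

lemma prab_kernel_1_0:
  assumes "s > 0"
  shows "prab_kernel \<alpha> 1 \<omega> 0 s = 1"
proof -
  have "(\<lambda>n. prab_coeff \<alpha> 1 0 n * z ^ n) = (\<lambda>n. if n = 0 then 1 else 0)" for z
    by (auto simp: prab_coeff_def fun_eq_iff pochhammer_0_left)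
  then have "prab_ML \<alpha> 1 0 z = 1" for z
    using sums_single[of 0 "\<lambda>_. 1::complex"] by (simp add: prab_ML_eq_suminf sums_iff)
  with assms show ?thesis
    by (simp add: prab_kernel_def)
qed

definition prab_kernel_term :: "complex \<Rightarrow> complex \<Rightarrow> complex \<Rightarrow> complex \<Rightarrow> nat \<Rightarrow> real \<Rightarrow> complex" where
  "prab_kernel_term \<alpha> \<gamma> \<omega> \<rho> n s =
     prab_coeff \<alpha> \<gamma> \<rho> n * \<omega> ^ n * complex_of_real s powr (\<alpha> * of_nat n + \<gamma> - 1)"

lemma norm_prab_kernel_term:
  assumes "s > 0"
  shows "norm (prab_kernel_term \<alpha> \<gamma> \<omega> \<rho> n s)
     = norm (prab_coeff \<alpha> \<gamma> \<rho> n) * (norm \<omega> * s powr Re \<alpha>) ^ n * s powr (Re \<gamma> - 1)"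
proof -
  have "s powr (Re \<alpha> * real n + Re \<gamma> - 1) = s powr (Re \<gamma> - 1) * s powr (Re \<alpha> * real n)"
    by (simp add: powr_add[symmetric] algebra_simps)
  with assms show ?thesis
    by (simp add: prab_kernel_term_def norm_mult norm_power power_mult_distrib powr_powr mult_ac
        flip: powr_realpow)
qed

lemma summable_norm_prab_kernel_term:
  assumes "Re \<alpha> > 0" "Re \<gamma> > 0" "s \<ge> 0"
  shows "summable (\<lambda>n. norm (prab_kernel_term \<alpha> \<gamma> \<omega> \<rho> n s))"
proof (cases "s > 0")
  case True
  show ?thesis
    unfolding norm_prab_kernel_term[OF True]
    by (intro summable_mult2 summable_norm_prab_coeff assms) auto
qed (use assms in \<open>simp add: prab_kernel_term_def\<close>)

lemma prab_kernel_term_sums: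
  assumes "Re \<alpha> > 0" "Re \<gamma> > 0" "s \<ge> 0"
  shows "(\<lambda>n. prab_kernel_term \<alpha> \<gamma> \<omega> \<rho> n s) sums prab_kernel \<alpha> \<gamma> \<omega> \<rho> s"
proof (cases "s > 0")
  case True
  have "(\<lambda>n. prab_coeff \<alpha> \<gamma> \<rho> n * (\<omega> * of_real s powr \<alpha>) ^ n) sums prab_ML \<alpha> \<gamma> \<rho> (\<omega> * of_real s powr \<alpha>)"
    unfolding prab_ML_eq_suminf
    by (rule summable_sums[OF summable_norm_cancel[OF summable_norm_prab_ML_series[OF assms(1,2)]]])
  from sums_mult[OF this, of "of_real s powr (\<gamma> - 1)"]
  have "(\<lambda>n. of_real s powr (\<gamma> - 1) * (prab_coeff \<alpha> \<gamma> \<rho> n * (\<omega> * of_real s powr \<alpha>) ^ n))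
      sums prab_kernel \<alpha> \<gamma> \<omega> \<rho> s"
    using True by (simp add: prab_kernel_def)
  moreover have "of_real s powr (\<gamma> - 1) * (prab_coeff \<alpha> \<gamma> \<rho> n * (\<omega> * of_real s powr \<alpha>) ^ n)
      = prab_kernel_term \<alpha> \<gamma> \<omega> \<rho> n s" for n
  proof -
    have "complex_of_real s powr (\<alpha> * of_nat n + \<gamma> - 1) = of_real s powr (of_nat n * \<alpha>) * of_real s powr (\<gamma> - 1)"
      by (simp add: powr_add[symmetric] algebra_simps)
    then show ?thesis
      using True by (simp add: prab_kernel_term_def power_mult_distrib of_real_powr_power mult_ac)
  qed
  ultimately show ?thesis
    by simp
qed (use assms in \<open>simp add: prab_kernel_term_def\<close>)

section \<open>The convolution identity for Prabhakar kernels\<close>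

lemma integral_Cauchy_product:
  fixes A B :: "nat \<Rightarrow> 'b \<Rightarrow> 'a::{banach, real_normed_algebra, second_countable_topology}"
  assumes int: "\<And>n j. integrable M (\<lambda>u. A n u * B j u)"
    and sA: "\<And>u. summable (\<lambda>n. norm (A n u))" and sB: "\<And>u. summable (\<lambda>n. norm (B n u))"
    and le: "\<And>n j. (\<integral>u. norm (A n u * B j u) \<partial>M) \<le> a n * b j"
    and a: "summable a" "\<And>n. a n \<ge> 0" and b: "summable b" "\<And>n. b n \<ge> 0"
  shows "(\<integral>u. (\<Sum>n. A n u) * (\<Sum>n. B n u) \<partial>M) = (\<Sum>N. \<Sum>n\<le>N. \<integral>u. A n u * B (N - n) u \<partial>M)"
proof -
  define F where "F N u = (\<Sum>n\<le>N. A n u * B (N - n) u)" for N u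
  have F_int: "integrable M (F N)" for N
    unfolding F_def by (intro Bochner_Integration.integrable_sum int)
  have F_sums: "(\<lambda>N. F N u) sums ((\<Sum>n. A n u) * (\<Sum>n. B n u))" for u
    unfolding F_def by (rule Cauchy_product_sums[OF sA sB])
  have g_sum: "summable (\<lambda>N. \<Sum>n\<le>N. a n * b (N - n))"
    using a b by (intro summable_Cauchy_product) (auto simp: abs_of_nonneg)
  have F_norm_le: "(\<integral>u. norm (F N u) \<partial>M) \<le> (\<Sum>n\<le>N. a n * b (N - n))" for N
  proof -
    have "(\<integral>u. norm (F N u) \<partial>M) \<le> (\<integral>u. (\<Sum>n\<le>N. norm (A n u * B (N - n) u)) \<partial>M)"
      unfolding F_def using int
      by (intro integral_mono Bochner_Integration.integrable_sum integrable_norm norm_sum)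
         (auto intro: Bochner_Integration.integrable_sum)
    also have "\<dots> = (\<Sum>n\<le>N. \<integral>u. norm (A n u * B (N - n) u) \<partial>M)"
      using int by (intro Bochner_Integration.integral_sum integrable_norm)
    also have "\<dots> \<le> (\<Sum>n\<le>N. a n * b (N - n))"
      by (intro sum_mono le)
    finally show ?thesis .
  qed
  have sum_int: "summable (\<lambda>N. \<integral>u. norm (F N u) \<partial>M)"
    by (rule summable_comparison_test'[OF g_sum, where N = 0]) (simp add: F_norm_le)
  have AE_sum: "AE u in M. summable (\<lambda>N. norm (F N u))"
  proof (rule AE_I2, rule summable_comparison_test'[where N = 0])
    fix u
    show "summable (\<lambda>N. \<Sum>n\<le>N. norm (A n u) * norm (B (N - n) u))"
      by (intro summable_Cauchy_product) (simp_all add: sA sB)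
    show "norm (norm (F N u)) \<le> (\<Sum>n\<le>N. norm (A n u) * norm (B (N - n) u))" for N
      unfolding F_def by (auto intro!: order.trans[OF norm_sum] sum_mono norm_mult_ineq)
  qed
  have "(\<integral>u. (\<Sum>n. A n u) * (\<Sum>n. B n u) \<partial>M) = (\<integral>u. (\<Sum>N. F N u) \<partial>M)"
    using F_sums by (simp add: sums_iff)
  also have "\<dots> = (\<Sum>N. \<integral>u. F N u \<partial>M)"
    by (rule integral_suminf[OF F_int AE_sum sum_int])
  also have "\<dots> = (\<Sum>N. \<Sum>n\<le>N. \<integral>u. A n u * B (N - n) u \<partial>M)"
    unfolding F_def using int by (simp add: Bochner_Integration.integral_sum)
  finally show ?thesis .
qed

lemma pochhammer_add_div_fact:
  fixes a b :: "'a::field_char_0"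
  shows "pochhammer (a + b) N / fact N
       = (\<Sum>n\<le>N. pochhammer a n * pochhammer b (N - n) / (fact n * fact (N - n)))"
proof -
  have "pochhammer (a + b) N / fact N
      = (\<Sum>n\<le>N. of_nat (N choose n) * pochhammer a n * pochhammer b (N - n) / fact N)"
    by (simp add: pochhammer_binomial_sum sum_divide_distrib)
  also have "\<dots> = (\<Sum>n\<le>N. pochhammer a n * pochhammer b (N - n) / (fact n * fact (N - n)))"
    by (intro sum.cong refl) (simp add: binomial_fact field_simps)
  finally show ?thesis .
qed

lemma prab_coeff_mult_Beta:
  assumes "Re \<alpha> > 0" "Re \<gamma>\<^sub>1 > 0" "Re \<gamma>\<^sub>2 > 0"
  shows "prab_coeff \<alpha> \<gamma>\<^sub>1 \<rho>\<^sub>1 n * prab_coeff \<alpha> \<gamma>\<^sub>2 \<rho>\<^sub>2 j * Beta (\<alpha> * of_nat n + \<gamma>\<^sub>1) (\<alpha> * of_nat j + \<gamma>\<^sub>2)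
     = pochhammer \<rho>\<^sub>1 n * pochhammer \<rho>\<^sub>2 j / (fact n * fact j) * rGamma (\<alpha> * of_nat (n + j) + (\<gamma>\<^sub>1 + \<gamma>\<^sub>2))"
proof -
  have pos: "Re (\<alpha> * of_nat n + \<gamma>\<^sub>1) > 0" "Re (\<alpha> * of_nat j + \<gamma>\<^sub>2) > 0"
    using assms by (auto intro!: add_nonneg_pos)
  have "rGamma (\<alpha> * of_nat (n + j) + (\<gamma>\<^sub>1 + \<gamma>\<^sub>2)) = rGamma ((\<alpha> * of_nat n + \<gamma>\<^sub>1) + (\<alpha> * of_nat j + \<gamma>\<^sub>2))"
    by (simp add: algebra_simps)
  also have "\<dots> = rGamma (\<alpha> * of_nat n + \<gamma>\<^sub>1) * rGamma (\<alpha> * of_nat j + \<gamma>\<^sub>2) *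
      Beta (\<alpha> * of_nat n + \<gamma>\<^sub>1) (\<alpha> * of_nat j + \<gamma>\<^sub>2)"
    by (rule rGamma_add_eq_Beta[OF pos])
  finally show ?thesis
    by (simp add: prab_coeff_def field_simps)
qed

lemma prab_kernel_term_mult_eq:
  "prab_kernel_term \<alpha> \<gamma>\<^sub>1 \<omega> \<rho>\<^sub>1 n (s - u) * prab_kernel_term \<alpha> \<gamma>\<^sub>2 \<omega> \<rho>\<^sub>2 j u =
    (prab_coeff \<alpha> \<gamma>\<^sub>1 \<rho>\<^sub>1 n * prab_coeff \<alpha> \<gamma>\<^sub>2 \<rho>\<^sub>2 j * \<omega> ^ (n + j)) *
    (complex_of_real (s - u) powr (\<alpha> * of_nat n + \<gamma>\<^sub>1 - 1) * of_real u powr (\<alpha> * of_nat j + \<gamma>\<^sub>2 - 1))"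
  by (simp add: prab_kernel_term_def power_add mult_ac del: of_real_diff)

lemma
  assumes \<alpha>: "Re \<alpha> > 0" and \<gamma>: "Re \<gamma>\<^sub>1 > 0" "Re \<gamma>\<^sub>2 > 0" and s: "s > 0"
  shows integrable_prab_kernel_term_convolution: "integrable lborel (\<lambda>u. indicator {0..s} u *\<^sub>R
      (prab_kernel_term \<alpha> \<gamma>\<^sub>1 \<omega> \<rho>\<^sub>1 n (s - u) * prab_kernel_term \<alpha> \<gamma>\<^sub>2 \<omega> \<rho>\<^sub>2 j u))"
    and lborel_integral_prab_kernel_term_convolution: "(\<integral>u. indicator {0..s} u *\<^sub>R
      (prab_kernel_term \<alpha> \<gamma>\<^sub>1 \<omega> \<rho>\<^sub>1 n (s - u) * prab_kernel_term \<alpha> \<gamma>\<^sub>2 \<omega> \<rho>\<^sub>2 j u) \<partial>lborel)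
      = pochhammer \<rho>\<^sub>1 n * pochhammer \<rho>\<^sub>2 j / (fact n * fact j) * rGamma (\<alpha> * of_nat (n + j) + (\<gamma>\<^sub>1 + \<gamma>\<^sub>2)) *
        \<omega> ^ (n + j) * of_real s powr (\<alpha> * of_nat (n + j) + (\<gamma>\<^sub>1 + \<gamma>\<^sub>2) - 1)"
proof -
  have pos: "Re (\<alpha> * of_nat n + \<gamma>\<^sub>1) > 0" "Re (\<alpha> * of_nat j + \<gamma>\<^sub>2) > 0"
    using assms by (auto intro!: add_nonneg_pos)
  have eq: "indicator {0..s} u *\<^sub>R
      (prab_kernel_term \<alpha> \<gamma>\<^sub>1 \<omega> \<rho>\<^sub>1 n (s - u) * prab_kernel_term \<alpha> \<gamma>\<^sub>2 \<omega> \<rho>\<^sub>2 j u) =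
    (prab_coeff \<alpha> \<gamma>\<^sub>1 \<rho>\<^sub>1 n * prab_coeff \<alpha> \<gamma>\<^sub>2 \<rho>\<^sub>2 j * \<omega> ^ (n + j)) * (indicator {0..s} u *\<^sub>R
    (complex_of_real (s - u) powr (\<alpha> * of_nat n + \<gamma>\<^sub>1 - 1) * of_real u powr (\<alpha> * of_nat j + \<gamma>\<^sub>2 - 1)))" for u
    unfolding prab_kernel_term_mult_eq by (rule mult_scaleR_right[symmetric])
  show "integrable lborel (\<lambda>u. indicator {0..s} u *\<^sub>R
      (prab_kernel_term \<alpha> \<gamma>\<^sub>1 \<omega> \<rho>\<^sub>1 n (s - u) * prab_kernel_term \<alpha> \<gamma>\<^sub>2 \<omega> \<rho>\<^sub>2 j u))"
    unfolding eq by (intro integrable_mult_right integrable_Beta_convolution pos s)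
  have exp_eq: "(\<alpha> * of_nat n + \<gamma>\<^sub>1) + (\<alpha> * of_nat j + \<gamma>\<^sub>2) - 1 = \<alpha> * of_nat (n + j) + (\<gamma>\<^sub>1 + \<gamma>\<^sub>2) - 1"
    by (simp add: algebra_simps)
  show "(\<integral>u. indicator {0..s} u *\<^sub>R
      (prab_kernel_term \<alpha> \<gamma>\<^sub>1 \<omega> \<rho>\<^sub>1 n (s - u) * prab_kernel_term \<alpha> \<gamma>\<^sub>2 \<omega> \<rho>\<^sub>2 j u) \<partial>lborel)
      = pochhammer \<rho>\<^sub>1 n * pochhammer \<rho>\<^sub>2 j / (fact n * fact j) * rGamma (\<alpha> * of_nat (n + j) + (\<gamma>\<^sub>1 + \<gamma>\<^sub>2)) *
        \<omega> ^ (n + j) * of_real s powr (\<alpha> * of_nat (n + j) + (\<gamma>\<^sub>1 + \<gamma>\<^sub>2) - 1)"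
    unfolding eq integral_mult_right_zero
      lborel_integral_Beta_convolution[OF pos s] exp_eq prab_coeff_mult_Beta[OF \<alpha> \<gamma>, symmetric]
    by (simp only: mult_ac)
qed

lemma integral_norm_prab_kernel_term_convolution_le:
  fixes \<omega> :: complex
  assumes \<alpha>: "Re \<alpha> > 0" and \<gamma>: "Re \<gamma>\<^sub>1 > 0" "Re \<gamma>\<^sub>2 > 0" and s: "s > 0"
  defines "r \<equiv> norm \<omega> * s powr Re \<alpha>"
  shows "(\<integral>u. norm (indicator {0..s} u *\<^sub>R
      (prab_kernel_term \<alpha> \<gamma>\<^sub>1 \<omega> \<rho>\<^sub>1 n (s - u) * prab_kernel_term \<alpha> \<gamma>\<^sub>2 \<omega> \<rho>\<^sub>2 j u)) \<partial>lborel)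
    \<le> Beta (Re \<gamma>\<^sub>1) (Re \<gamma>\<^sub>2) * s powr (Re \<gamma>\<^sub>1 + Re \<gamma>\<^sub>2 - 1) *
      ((norm (prab_coeff \<alpha> \<gamma>\<^sub>1 \<rho>\<^sub>1 n) * r ^ n) * (norm (prab_coeff \<alpha> \<gamma>\<^sub>2 \<rho>\<^sub>2 j) * r ^ j))"
proof -
  define C where "C = norm (prab_coeff \<alpha> \<gamma>\<^sub>1 \<rho>\<^sub>1 n) * norm (prab_coeff \<alpha> \<gamma>\<^sub>2 \<rho>\<^sub>2 j) * norm \<omega> ^ (n + j)"
  define p where "p = real n * Re \<alpha> + Re \<gamma>\<^sub>1"
  define q where "q = real j * Re \<alpha> + Re \<gamma>\<^sub>2"
  have pq: "p \<ge> Re \<gamma>\<^sub>1" "q \<ge> Re \<gamma>\<^sub>2"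
    using \<alpha> by (simp_all add: p_def q_def)
  have norm_eq: "norm (indicator {0..s} u *\<^sub>R
      (prab_kernel_term \<alpha> \<gamma>\<^sub>1 \<omega> \<rho>\<^sub>1 n (s - u) * prab_kernel_term \<alpha> \<gamma>\<^sub>2 \<omega> \<rho>\<^sub>2 j u))
      = C * (indicator {0..s} u * ((s - u) powr (p - 1) * u powr (q - 1)))" for u
    unfolding prab_kernel_term_mult_eq
    by (cases "u \<in> {0..s}")
       (simp_all add: C_def p_def q_def norm_mult norm_power mult_ac
         del: of_real_diff)
  have "p > 0" "q > 0"
    using pq \<gamma> by auto
  then have "(\<integral>u. norm (indicator {0..s} u *\<^sub>R
      (prab_kernel_term \<alpha> \<gamma>\<^sub>1 \<omega> \<rho>\<^sub>1 n (s - u) * prab_kernel_term \<alpha> \<gamma>\<^sub>2 \<omega> \<rho>\<^sub>2 j u)) \<partial>lborel)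
      = C * (Beta p q * s powr (p + q - 1))"
    unfolding norm_eq integral_mult_right_zero using s by (simp add: lborel_integral_Beta_real_convolution)
  also have "\<dots> \<le> C * (Beta (Re \<gamma>\<^sub>1) (Re \<gamma>\<^sub>2) * s powr (p + q - 1))"
    using pq \<gamma> by (intro mult_left_mono mult_right_mono Beta_real_mono) (auto simp: C_def)
  also have "s powr (p + q - 1) = (s powr Re \<alpha>) ^ (n + j) * s powr (Re \<gamma>\<^sub>1 + Re \<gamma>\<^sub>2 - 1)"
    using s by (simp add: p_def q_def powr_realpow[symmetric] powr_powr powr_add[symmetric] algebra_simps)
  finally show ?thesis
    by (simp add: C_def r_def power_add power_mult_distrib mult_ac)
qed

lemma sum_lborel_integral_prab_kernel_term_convolution:
  assumes "Re \<alpha> > 0" "Re \<gamma>\<^sub>1 > 0" "Re \<gamma>\<^sub>2 > 0" "s > 0"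
  shows "(\<Sum>n\<le>N. \<integral>u. indicator {0..s} u *\<^sub>R
      (prab_kernel_term \<alpha> \<gamma>\<^sub>1 \<omega> \<rho>\<^sub>1 n (s - u) * prab_kernel_term \<alpha> \<gamma>\<^sub>2 \<omega> \<rho>\<^sub>2 (N - n) u) \<partial>lborel)
    = prab_kernel_term \<alpha> (\<gamma>\<^sub>1 + \<gamma>\<^sub>2) \<omega> (\<rho>\<^sub>1 + \<rho>\<^sub>2) N s"
proof -
  define X where "X = rGamma (\<alpha> * of_nat N + (\<gamma>\<^sub>1 + \<gamma>\<^sub>2)) * \<omega> ^ N *
    complex_of_real s powr (\<alpha> * of_nat N + (\<gamma>\<^sub>1 + \<gamma>\<^sub>2) - 1)"
  have "(\<Sum>n\<le>N. \<integral>u. indicator {0..s} u *\<^sub>R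
      (prab_kernel_term \<alpha> \<gamma>\<^sub>1 \<omega> \<rho>\<^sub>1 n (s - u) * prab_kernel_term \<alpha> \<gamma>\<^sub>2 \<omega> \<rho>\<^sub>2 (N - n) u) \<partial>lborel)
    = (\<Sum>n\<le>N. pochhammer \<rho>\<^sub>1 n * pochhammer \<rho>\<^sub>2 (N - n) / (fact n * fact (N - n)) * X)"
    by (intro sum.cong refl)
       (simp add: lborel_integral_prab_kernel_term_convolution[OF assms] X_def mult_ac)
  also have "\<dots> = pochhammer (\<rho>\<^sub>1 + \<rho>\<^sub>2) N / fact N * X"
    by (simp add: pochhammer_add_div_fact sum_distrib_right)
  finally show ?thesis
    by (simp add: X_def prab_kernel_term_def prab_coeff_def mult_ac)
qed

lemma lborel_integral_prab_kernel_convolution: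
  assumes \<alpha>: "Re \<alpha> > 0" and \<gamma>: "Re \<gamma>\<^sub>1 > 0" "Re \<gamma>\<^sub>2 > 0" and s: "s > 0"
  shows "(\<integral>u. indicator {0..s} u *\<^sub>R (prab_kernel \<alpha> \<gamma>\<^sub>1 \<omega> \<rho>\<^sub>1 (s - u) * prab_kernel \<alpha> \<gamma>\<^sub>2 \<omega> \<rho>\<^sub>2 u) \<partial>lborel)
       = prab_kernel \<alpha> (\<gamma>\<^sub>1 + \<gamma>\<^sub>2) \<omega> (\<rho>\<^sub>1 + \<rho>\<^sub>2) s"
proof -
  \<comment> \<open>Both factors carry the cut-off, so that both series converge for every \<open>u\<close>.\<close>
  define A where "A n u = indicator {0..s} u *\<^sub>R prab_kernel_term \<alpha> \<gamma>\<^sub>1 \<omega> \<rho>\<^sub>1 n (s - u)" for n u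
  define B where "B n u = indicator {0..s} u *\<^sub>R prab_kernel_term \<alpha> \<gamma>\<^sub>2 \<omega> \<rho>\<^sub>2 n u" for n u
  define r where "r = norm \<omega> * s powr Re \<alpha>"
  define C where "C = Beta (Re \<gamma>\<^sub>1) (Re \<gamma>\<^sub>2) * s powr (Re \<gamma>\<^sub>1 + Re \<gamma>\<^sub>2 - 1)"
  have AB: "A n u * B j u = indicator {0..s} u *\<^sub>R
      (prab_kernel_term \<alpha> \<gamma>\<^sub>1 \<omega> \<rho>\<^sub>1 n (s - u) * prab_kernel_term \<alpha> \<gamma>\<^sub>2 \<omega> \<rho>\<^sub>2 j u)" for n j u
    by (simp add: A_def B_def indicator_def)
  have A_sums: "(\<lambda>n. A n u) sums (indicator {0..s} u *\<^sub>R prab_kernel \<alpha> \<gamma>\<^sub>1 \<omega> \<rho>\<^sub>1 (s - u))"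
    and B_sums: "(\<lambda>n. B n u) sums (indicator {0..s} u *\<^sub>R prab_kernel \<alpha> \<gamma>\<^sub>2 \<omega> \<rho>\<^sub>2 u)"
    and A_summable: "summable (\<lambda>n. norm (A n u))" and B_summable: "summable (\<lambda>n. norm (B n u))" for u
    using assms
    by (cases "u \<in> {0..s}";
        simp add: A_def B_def prab_kernel_term_sums summable_norm_prab_kernel_term)+
  have "(\<integral>u. indicator {0..s} u *\<^sub>R (prab_kernel \<alpha> \<gamma>\<^sub>1 \<omega> \<rho>\<^sub>1 (s - u) * prab_kernel \<alpha> \<gamma>\<^sub>2 \<omega> \<rho>\<^sub>2 u) \<partial>lborel)
      = (\<integral>u. (\<Sum>n. A n u) * (\<Sum>n. B n u) \<partial>lborel)"
    by (intro Bochner_Integration.integral_cong refl)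
       (simp add: sums_unique[OF A_sums, symmetric] sums_unique[OF B_sums, symmetric] indicator_def)
  also have "\<dots> = (\<Sum>N. \<Sum>n\<le>N. \<integral>u. A n u * B (N - n) u \<partial>lborel)"
  proof (rule integral_Cauchy_product[where a = "\<lambda>n. C * (norm (prab_coeff \<alpha> \<gamma>\<^sub>1 \<rho>\<^sub>1 n) * r ^ n)"
        and b = "\<lambda>j. norm (prab_coeff \<alpha> \<gamma>\<^sub>2 \<rho>\<^sub>2 j) * r ^ j"])
    show "integrable lborel (\<lambda>u. A n u * B j u)" for n j
      unfolding AB by (rule integrable_prab_kernel_term_convolution[OF assms])
    show "(\<integral>u. norm (A n u * B j u) \<partial>lborel) \<le>
        C * (norm (prab_coeff \<alpha> \<gamma>\<^sub>1 \<rho>\<^sub>1 n) * r ^ n) * (norm (prab_coeff \<alpha> \<gamma>\<^sub>2 \<rho>\<^sub>2 j) * r ^ j)" for n j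
      unfolding AB C_def r_def
      by (rule order.trans[OF integral_norm_prab_kernel_term_convolution_le[OF assms]]) (simp add: mult_ac)
    have "r \<ge> 0" "C \<ge> 0"
      using Beta_real_pos[OF \<gamma>] by (simp_all add: r_def C_def)
    then show "summable (\<lambda>n. C * (norm (prab_coeff \<alpha> \<gamma>\<^sub>1 \<rho>\<^sub>1 n) * r ^ n))"
      and "summable (\<lambda>j. norm (prab_coeff \<alpha> \<gamma>\<^sub>2 \<rho>\<^sub>2 j) * r ^ j)"
      and "\<And>n. C * (norm (prab_coeff \<alpha> \<gamma>\<^sub>1 \<rho>\<^sub>1 n) * r ^ n) \<ge> 0"
      and "\<And>j. norm (prab_coeff \<alpha> \<gamma>\<^sub>2 \<rho>\<^sub>2 j) * r ^ j \<ge> 0"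
      using \<alpha> \<gamma> by (auto intro!: summable_mult summable_norm_prab_coeff)
  qed (use A_summable B_summable in auto)
  also have "\<dots> = (\<Sum>N. prab_kernel_term \<alpha> (\<gamma>\<^sub>1 + \<gamma>\<^sub>2) \<omega> (\<rho>\<^sub>1 + \<rho>\<^sub>2) N s)"
    unfolding AB sum_lborel_integral_prab_kernel_term_convolution[OF assms] ..
  also have "\<dots> = prab_kernel \<alpha> (\<gamma>\<^sub>1 + \<gamma>\<^sub>2) \<omega> (\<rho>\<^sub>1 + \<rho>\<^sub>2) s"
    using \<alpha> \<gamma> s by (intro sums_unique[symmetric] prab_kernel_term_sums) auto
  finally show ?thesis .
qed

section \<open>Volterra operators with weakly singular kernels\<close>

definition volterra :: "(real \<Rightarrow> complex) \<Rightarrow> real \<Rightarrow> (real \<Rightarrow> complex) \<Rightarrow> real \<Rightarrow> complex" where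
  "volterra K c h x = (\<integral>t. indicator {c..x} t *\<^sub>R (K (x - t) * h t) \<partial>lborel)"

lemma volterra_cong:
  "(\<And>t. t \<in> {c..x} \<Longrightarrow> h\<^sub>1 t = h\<^sub>2 t) \<Longrightarrow> volterra K c h\<^sub>1 x = volterra K c h\<^sub>2 x"
  unfolding volterra_def by (intro Bochner_Integration.integral_cong refl) (auto simp: indicator_def)

lemma measurable_volterra [measurable]:
  assumes [measurable]: "K \<in> borel_measurable borel" "h \<in> borel_measurable borel"
  shows "volterra K c h \<in> borel_measurable borel"
proof -
  have "volterra K c h = (\<lambda>x. \<integral>t. (if c \<le> t \<and> t \<le> x then K (x - t) * h t else 0) \<partial>lborel)"
    unfolding volterra_def by (intro ext Bochner_Integration.integral_cong) (auto simp: indicator_def)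
  then show ?thesis
    by simp
qed

lemma volterra_const_1:
  assumes "\<And>s. s > 0 \<Longrightarrow> K s = 1" and [measurable]: "h \<in> borel_measurable borel"
  shows "volterra K c h x = (LINT t:{c..x}|lborel. h t)"
  unfolding volterra_def set_lebesgue_integral_def
proof (rule integral_cong_AE)
  have "AE t in lborel. t \<noteq> x"
    by (rule AE_lborel_singleton)
  then show "AE t in lborel. indicator {c..x} t *\<^sub>R (K (x - t) * h t) = indicator {c..x} t *\<^sub>R h t"
    by eventually_elim (auto simp: indicator_def assms(1))
  have "(\<lambda>t. indicator {c..x} t *\<^sub>R (K (x - t) * h t)) =
      (\<lambda>t. indicator {c..x} t *\<^sub>R ((if t = x then K 0 else 1) * h t))"
    by (auto simp: fun_eq_iff indicator_def assms(1))
  then show "(\<lambda>t. indicator {c..x} t *\<^sub>R (K (x - t) * h t)) \<in> borel_measurable lborel"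
    by simp
qed simp

lemma pred_snd_in_Icc_fst [measurable]:
  "Measurable.pred (borel \<Otimes>\<^sub>M borel) (\<lambda>p::real \<times> real. snd p \<in> {c..fst p})"
  unfolding atLeastAtMost_iff by measurable

lemma pred_snd_in_Icc_snd_fst [measurable]:
  "Measurable.pred ((borel \<Otimes>\<^sub>M borel) \<Otimes>\<^sub>M borel) (\<lambda>p::(real \<times> real) \<times> real. snd p \<in> {c..snd (fst p)})"
  unfolding atLeastAtMost_iff by measurable

lemma nn_integral_powr_interval:
  fixes r u d :: real assumes r: "r > 0" and ud: "u \<le> d"
  shows "(\<integral>\<^sup>+x. ennreal (indicator {u..d} x * (x - u) powr (r - 1)) \<partial>lborel) = ennreal ((d - u) powr r / r)"
proof -
  have "(\<integral>\<^sup>+x. ennreal (indicator {u..d} x * (x - u) powr (r - 1)) \<partial>lborel)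
      = (\<integral>\<^sup>+x. ennreal (indicator {u..d} (u + x) * ((u + x) - u) powr (r - 1)) \<partial>lborel)"
    by (rule nn_integral_real_affine[where c=1 and t=u, simplified]) measurable
  also have "\<dots> = (\<integral>\<^sup>+x. ennreal (indicator {0..d - u} x * x powr (r - 1)) \<partial>lborel)"
    by (intro nn_integral_cong) (auto simp: indicator_def)
  also have "\<dots> = ennreal ((d - u) powr (r - 1 + 1) / (r - 1 + 1))"
    by (rule nn_integral_has_integral_lebesgue[OF _ has_integral_powr_from_0]) (use r ud in auto)
  finally show ?thesis by simp
qed

lemma nn_integral_powr_volterra_le:
  fixes h :: "real \<Rightarrow> complex"
  assumes [measurable]: "h \<in> borel_measurable borel" and r: "r > 0"
  shows "(\<integral>\<^sup>+x. \<integral>\<^sup>+u. ennreal (indicator {c..d} x * (indicator {c..x} u * norm (h u) * (x - u) powr (r - 1))) \<partial>lborel \<partial>lborel)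
     \<le> ennreal ((d - c) powr r / r) * (\<integral>\<^sup>+u. ennreal (indicator {c..d} u * norm (h u)) \<partial>lborel)"
proof -
  have "(\<integral>\<^sup>+x. \<integral>\<^sup>+u. ennreal (indicator {c..d} x * (indicator {c..x} u * norm (h u) * (x - u) powr (r - 1))) \<partial>lborel \<partial>lborel)
      = (\<integral>\<^sup>+u. \<integral>\<^sup>+x. ennreal (indicator {c..d} x * (indicator {c..x} u * norm (h u) * (x - u) powr (r - 1))) \<partial>lborel \<partial>lborel)"
    by (rule lborel_pair.Fubini'[symmetric]) measurable
  also have "\<dots> \<le> (\<integral>\<^sup>+u. ennreal ((d - c) powr r / r) * ennreal (indicator {c..d} u * norm (h u)) \<partial>lborel)"
  proof (intro nn_integral_mono)
    fix u :: real
    show "(\<integral>\<^sup>+x. ennreal (indicator {c..d} x * (indicator {c..x} u * norm (h u) * (x - u) powr (r - 1))) \<partial>lborel)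
       \<le> ennreal ((d - c) powr r / r) * ennreal (indicator {c..d} u * norm (h u))"
    proof (cases "u \<in> {c..d}")
      case False
      then have "(\<lambda>x. ennreal (indicator {c..d} x * (indicator {c..x} u * norm (h u) * (x - u) powr (r - 1)))) = (\<lambda>x. 0)"
        by (auto simp: indicator_def fun_eq_iff)
      then show ?thesis
        by simp
    next
      case True
      have "(\<integral>\<^sup>+x. ennreal (indicator {c..d} x * (indicator {c..x} u * norm (h u) * (x - u) powr (r - 1))) \<partial>lborel)
          = (\<integral>\<^sup>+x. ennreal (norm (h u)) * ennreal (indicator {u..d} x * (x - u) powr (r - 1)) \<partial>lborel)"
        using True by (intro nn_integral_cong) (auto simp: indicator_def ennreal_mult'[symmetric])
      also have "\<dots> = ennreal (norm (h u)) * ennreal ((d - u) powr r / r)"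
        using True by (subst nn_integral_cmult) (auto simp: nn_integral_powr_interval[OF r])
      also have "\<dots> \<le> ennreal (norm (h u)) * ennreal ((d - c) powr r / r)"
        using True r by (intro mult_left_mono ennreal_leI divide_right_mono powr_mono2) auto
      also have "\<dots> = ennreal ((d - c) powr r / r) * ennreal (indicator {c..d} u * norm (h u))"
        using True by (simp add: mult.commute)
      finally show ?thesis .
    qed
  qed
  also have "\<dots> = ennreal ((d - c) powr r / r) * (\<integral>\<^sup>+u. ennreal (indicator {c..d} u * norm (h u)) \<partial>lborel)"
    by (rule nn_integral_cmult) measurable
  finally show ?thesis .
qed

lemma nn_integral_kernel_convolution_le:
  fixes K\<^sub>1 K\<^sub>2 :: "real \<Rightarrow> complex"
  assumes K\<^sub>1: "\<And>s. 0 < s \<Longrightarrow> s \<le> R \<Longrightarrow> norm (K\<^sub>1 s) \<le> M\<^sub>1 * s powr (r\<^sub>1 - 1)" "K\<^sub>1 0 = 0"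
    and K\<^sub>2: "\<And>s. 0 < s \<Longrightarrow> s \<le> R \<Longrightarrow> norm (K\<^sub>2 s) \<le> M\<^sub>2 * s powr (r\<^sub>2 - 1)" "K\<^sub>2 0 = 0"
    and M: "M\<^sub>1 \<ge> 0" "M\<^sub>2 \<ge> 0" and r: "r\<^sub>1 > 0" "r\<^sub>2 > 0" and ux: "u \<le> x" "x - u \<le> R"
  shows "(\<integral>\<^sup>+t. ennreal (indicator {u..x} t * (norm (K\<^sub>1 (x - t)) * norm (K\<^sub>2 (t - u)))) \<partial>lborel)
     \<le> ennreal (M\<^sub>1 * M\<^sub>2 * Beta r\<^sub>1 r\<^sub>2 * (x - u) powr (r\<^sub>1 + r\<^sub>2 - 1))"
proof -
  have "(\<integral>\<^sup>+t. ennreal (indicator {u..x} t * (norm (K\<^sub>1 (x - t)) * norm (K\<^sub>2 (t - u)))) \<partial>lborel)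
      \<le> (\<integral>\<^sup>+t. ennreal (M\<^sub>1 * M\<^sub>2) * ennreal (indicator {u..x} t * ((x - t) powr (r\<^sub>1 - 1) * (t - u) powr (r\<^sub>2 - 1))) \<partial>lborel)"
  proof (intro nn_integral_mono)
    fix t :: real
    consider "t \<in> {u<..<x}" | "t = u" | "t = x" | "t \<notin> {u..x}"
      by fastforce
    then show "ennreal (indicator {u..x} t * (norm (K\<^sub>1 (x - t)) * norm (K\<^sub>2 (t - u))))
        \<le> ennreal (M\<^sub>1 * M\<^sub>2) * ennreal (indicator {u..x} t * ((x - t) powr (r\<^sub>1 - 1) * (t - u) powr (r\<^sub>2 - 1)))"
    proof cases
      case 1
      then have "norm (K\<^sub>1 (x - t)) * norm (K\<^sub>2 (t - u)) \<le> (M\<^sub>1 * (x - t) powr (r\<^sub>1 - 1)) * (M\<^sub>2 * (t - u) powr (r\<^sub>2 - 1))"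
        using ux M by (intro mult_mono K\<^sub>1 K\<^sub>2) auto
      with 1 M show ?thesis
        by (simp add: indicator_def ennreal_mult'[symmetric] mult_ac)
    qed (use K\<^sub>1 K\<^sub>2 in auto)
  qed
  also have "\<dots> = ennreal (M\<^sub>1 * M\<^sub>2) * ennreal (Beta r\<^sub>1 r\<^sub>2 * (x - u) powr (r\<^sub>1 + r\<^sub>2 - 1))"
    using ux by (subst nn_integral_cmult) (auto simp: nn_integral_Beta_real_interval[OF r])
  also have "\<dots> = ennreal (M\<^sub>1 * M\<^sub>2 * Beta r\<^sub>1 r\<^sub>2 * (x - u) powr (r\<^sub>1 + r\<^sub>2 - 1))"
    using M by (simp add: ennreal_mult'[symmetric] mult_ac)
  finally show ?thesis .
qed

lemma nn_integral_volterra_compose_le: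
  fixes K\<^sub>1 K\<^sub>2 h :: "real \<Rightarrow> complex"
  assumes [measurable]: "K\<^sub>1 \<in> borel_measurable borel" "K\<^sub>2 \<in> borel_measurable borel" "h \<in> borel_measurable borel"
    and K\<^sub>1: "\<And>s. 0 < s \<Longrightarrow> s \<le> R \<Longrightarrow> norm (K\<^sub>1 s) \<le> M\<^sub>1 * s powr (r\<^sub>1 - 1)" "K\<^sub>1 0 = 0"
    and K\<^sub>2: "\<And>s. 0 < s \<Longrightarrow> s \<le> R \<Longrightarrow> norm (K\<^sub>2 s) \<le> M\<^sub>2 * s powr (r\<^sub>2 - 1)" "K\<^sub>2 0 = 0"
    and M: "M\<^sub>1 \<ge> 0" "M\<^sub>2 \<ge> 0" and r: "r\<^sub>1 > 0" "r\<^sub>2 > 0" and xR: "x - c \<le> R"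
  shows "(\<integral>\<^sup>+t. \<integral>\<^sup>+u. ennreal (indicator {c..x} t * indicator {c..t} u *
            (norm (K\<^sub>1 (x - t)) * norm (K\<^sub>2 (t - u)) * norm (h u))) \<partial>lborel \<partial>lborel)
     \<le> ennreal (M\<^sub>1 * M\<^sub>2 * Beta r\<^sub>1 r\<^sub>2) *
         (\<integral>\<^sup>+u. ennreal (indicator {c..x} u * norm (h u) * (x - u) powr (r\<^sub>1 + r\<^sub>2 - 1)) \<partial>lborel)"
proof -
  have "(\<integral>\<^sup>+t. \<integral>\<^sup>+u. ennreal (indicator {c..x} t * indicator {c..t} u *
          (norm (K\<^sub>1 (x - t)) * norm (K\<^sub>2 (t - u)) * norm (h u))) \<partial>lborel \<partial>lborel)
      = (\<integral>\<^sup>+u. \<integral>\<^sup>+t. ennreal (indicator {c..x} t * indicator {c..t} u *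
          (norm (K\<^sub>1 (x - t)) * norm (K\<^sub>2 (t - u)) * norm (h u))) \<partial>lborel \<partial>lborel)"
    by (rule lborel_pair.Fubini'[symmetric]) measurable
  also have "\<dots> \<le> (\<integral>\<^sup>+u. ennreal (M\<^sub>1 * M\<^sub>2 * Beta r\<^sub>1 r\<^sub>2) *
      ennreal (indicator {c..x} u * norm (h u) * (x - u) powr (r\<^sub>1 + r\<^sub>2 - 1)) \<partial>lborel)"
  proof (intro nn_integral_mono)
    fix u :: real
    show "(\<integral>\<^sup>+t. ennreal (indicator {c..x} t * indicator {c..t} u *
          (norm (K\<^sub>1 (x - t)) * norm (K\<^sub>2 (t - u)) * norm (h u))) \<partial>lborel)
        \<le> ennreal (M\<^sub>1 * M\<^sub>2 * Beta r\<^sub>1 r\<^sub>2) * ennreal (indicator {c..x} u * norm (h u) * (x - u) powr (r\<^sub>1 + r\<^sub>2 - 1))"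
    proof (cases "u \<in> {c..x}")
      case True
      have "(\<integral>\<^sup>+t. ennreal (indicator {c..x} t * indicator {c..t} u *
          (norm (K\<^sub>1 (x - t)) * norm (K\<^sub>2 (t - u)) * norm (h u))) \<partial>lborel)
        = ennreal (norm (h u)) * (\<integral>\<^sup>+t. ennreal (indicator {u..x} t * (norm (K\<^sub>1 (x - t)) * norm (K\<^sub>2 (t - u)))) \<partial>lborel)"
        using True by (subst nn_integral_cmult[symmetric])
          (auto intro!: nn_integral_cong simp: indicator_def ennreal_mult'[symmetric] mult_ac)
      also have "\<dots> \<le> ennreal (norm (h u)) * ennreal (M\<^sub>1 * M\<^sub>2 * Beta r\<^sub>1 r\<^sub>2 * (x - u) powr (r\<^sub>1 + r\<^sub>2 - 1))"
        using True xR by (intro mult_left_mono nn_integral_kernel_convolution_le[OF K\<^sub>1 K\<^sub>2 M r]) auto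
      finally show ?thesis
        using True M Beta_real_pos[OF r] by (simp add: ennreal_mult'[symmetric] mult_ac)
    next
      case False
      then have "(\<lambda>t. ennreal (indicator {c..x} t * indicator {c..t} u *
          (norm (K\<^sub>1 (x - t)) * norm (K\<^sub>2 (t - u)) * norm (h u)))) = (\<lambda>t. 0)"
        by (auto simp: indicator_def fun_eq_iff)
      then show ?thesis
        by simp
    qed
  qed
  also have "\<dots> = ennreal (M\<^sub>1 * M\<^sub>2 * Beta r\<^sub>1 r\<^sub>2) *
      (\<integral>\<^sup>+u. ennreal (indicator {c..x} u * norm (h u) * (x - u) powr (r\<^sub>1 + r\<^sub>2 - 1)) \<partial>lborel)"
    by (rule nn_integral_cmult) measurable
  finally show ?thesis .
qed

lemma lborel_integral_kernel_convolution_shift: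
  fixes K\<^sub>1 K\<^sub>2 K\<^sub>1\<^sub>2 :: "real \<Rightarrow> complex"
  assumes conv: "\<And>s. s > 0 \<Longrightarrow> (\<integral>v. indicator {0..s} v *\<^sub>R (K\<^sub>1 (s - v) * K\<^sub>2 v) \<partial>lborel) = K\<^sub>1\<^sub>2 s"
    and "K\<^sub>2 0 = 0" "K\<^sub>1\<^sub>2 0 = 0" "u \<le> x"
  shows "(\<integral>t. indicator {u..x} t *\<^sub>R (K\<^sub>1 (x - t) * K\<^sub>2 (t - u)) \<partial>lborel) = K\<^sub>1\<^sub>2 (x - u)"
proof -
  have "(\<integral>t. indicator {u..x} t *\<^sub>R (K\<^sub>1 (x - t) * K\<^sub>2 (t - u)) \<partial>lborel)
      = (\<integral>v. indicator {u..x} (u + v) *\<^sub>R (K\<^sub>1 (x - (u + v)) * K\<^sub>2 ((u + v) - u)) \<partial>lborel)"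
    using lborel_integral_real_affine[of 1 "\<lambda>t. indicator {u..x} t *\<^sub>R (K\<^sub>1 (x - t) * K\<^sub>2 (t - u))" u]
    by simp
  also have "\<dots> = (\<integral>v. indicator {0..x - u} v *\<^sub>R (K\<^sub>1 ((x - u) - v) * K\<^sub>2 v) \<partial>lborel)"
    by (intro Bochner_Integration.integral_cong refl) (auto simp: indicator_def algebra_simps)
  also have "\<dots> = K\<^sub>1\<^sub>2 (x - u)"
  proof (cases "x - u > 0")
    case False
    with assms have "x - u = 0" "(\<lambda>v. indicator {0..x - u} v *\<^sub>R (K\<^sub>1 ((x - u) - v) * K\<^sub>2 v)) = (\<lambda>v. 0)"
      by (auto simp: indicator_def fun_eq_iff)
    with assms show ?thesis by simp
  qed (rule conv)
  finally show ?thesis .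
qed

lemma volterra_compose_eq:
  fixes K\<^sub>1 K\<^sub>2 K\<^sub>1\<^sub>2 h :: "real \<Rightarrow> complex"
  assumes [measurable]: "K\<^sub>1 \<in> borel_measurable borel" "K\<^sub>2 \<in> borel_measurable borel" "h \<in> borel_measurable borel"
    and conv: "\<And>s. s > 0 \<Longrightarrow> (\<integral>v. indicator {0..s} v *\<^sub>R (K\<^sub>1 (s - v) * K\<^sub>2 v) \<partial>lborel) = K\<^sub>1\<^sub>2 s"
    and "K\<^sub>2 0 = 0" "K\<^sub>1\<^sub>2 0 = 0"
    and fin: "(\<integral>\<^sup>+t. \<integral>\<^sup>+u. ennreal (indicator {c..x} t * indicator {c..t} u *
        (norm (K\<^sub>1 (x - t)) * norm (K\<^sub>2 (t - u)) * norm (h u))) \<partial>lborel \<partial>lborel) < \<infinity>"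
  shows "volterra K\<^sub>1 c (volterra K\<^sub>2 c h) x = volterra K\<^sub>1\<^sub>2 c h x"
proof -
  define G where "G = (\<lambda>(t, u). (indicator {c..x} t *\<^sub>R K\<^sub>1 (x - t)) * (indicator {c..t} u *\<^sub>R (K\<^sub>2 (t - u) * h u)))"
  have [measurable]: "G \<in> borel_measurable (lborel \<Otimes>\<^sub>M lborel)"
    unfolding G_def by measurable
  have "(\<integral>\<^sup>+p. ennreal (norm (G p)) \<partial>(lborel \<Otimes>\<^sub>M lborel)) = (\<integral>\<^sup>+t. \<integral>\<^sup>+u. ennreal (norm (G (t, u))) \<partial>lborel \<partial>lborel)"
    by (rule lborel.nn_integral_fst[symmetric]) measurable
  also have "\<dots> < \<infinity>"
    using fin by (simp add: G_def norm_mult indicator_def mult_ac)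
  finally have "integrable (lborel \<Otimes>\<^sub>M lborel) G"
    by (intro integrableI_bounded) measurable
  then have "(\<integral>t. (\<integral>u. G (t, u) \<partial>lborel) \<partial>lborel) = (\<integral>u. (\<integral>t. G (t, u) \<partial>lborel) \<partial>lborel)"
    using lborel_pair.Fubini_integral[of "\<lambda>t u. G (t, u)"] by simp
  moreover have "(\<integral>u. G (t, u) \<partial>lborel) = indicator {c..x} t *\<^sub>R (K\<^sub>1 (x - t) * volterra K\<^sub>2 c h t)" for t
    unfolding G_def volterra_def case_prod_conv integral_mult_right_zero by (simp add: mult_scaleR_left)
  moreover have "(\<integral>t. G (t, u) \<partial>lborel) = indicator {c..x} u *\<^sub>R (K\<^sub>1\<^sub>2 (x - u) * h u)" for u
  proof (cases "u \<in> {c..x}")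
    case True
    then have "(\<integral>t. G (t, u) \<partial>lborel) = (\<integral>t. h u * (indicator {u..x} t *\<^sub>R (K\<^sub>1 (x - t) * K\<^sub>2 (t - u))) \<partial>lborel)"
      by (intro Bochner_Integration.integral_cong refl) (auto simp: G_def indicator_def)
    also have "\<dots> = h u * K\<^sub>1\<^sub>2 (x - u)"
      using True lborel_integral_kernel_convolution_shift[OF conv assms(5,6), of u x]
      by (simp only: integral_mult_right_zero) simp
    finally show ?thesis
      using True by (simp add: mult.commute)
  next
    case False
    then have "(\<lambda>t. G (t, u)) = (\<lambda>t. 0)"
      by (auto simp: G_def indicator_def fun_eq_iff)
    with False show ?thesis
      by simp
  qed
  ultimately show ?thesis
    by (simp add: volterra_def)
qed

definition weakly_singular :: "(real \<Rightarrow> complex) \<Rightarrow> real \<Rightarrow> real \<Rightarrow> bool" where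
  "weakly_singular K r R \<longleftrightarrow> K \<in> borel_measurable borel \<and> K 0 = 0 \<and>
     (\<exists>M\<ge>0. \<forall>s. 0 < s \<longrightarrow> s \<le> R \<longrightarrow> norm (K s) \<le> M * s powr (r - 1))"

lemma ennreal_norm_integral_le:
  fixes f :: "_ \<Rightarrow> 'a::{banach, second_countable_topology}"
  shows "ennreal (norm (\<integral>x. f x \<partial>M)) \<le> (\<integral>\<^sup>+x. ennreal (norm (f x)) \<partial>M)"
  by (cases "integrable M f") (simp_all add: integral_norm_bound_ennreal not_integrable_integral_eq)

lemma nn_integral_indicator_norm_less_top:
  fixes h :: "_ \<Rightarrow> 'b::{banach, second_countable_topology}"
  assumes "set_integrable M A h"
  shows "(\<integral>\<^sup>+u. ennreal (indicator A u * norm (h u)) \<partial>M) < \<infinity>"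
proof -
  have "integrable M (\<lambda>u. indicator A u *\<^sub>R h u)"
    using assms by (simp add: set_integrable_def)
  then have "(\<integral>\<^sup>+u. ennreal (norm (indicator A u *\<^sub>R h u)) \<partial>M) < \<infinity>"
    by (simp add: integrable_iff_bounded)
  then show ?thesis
    by (simp add: indicator_def)
qed

lemma norm_volterra_le:
  fixes K h :: "real \<Rightarrow> complex"
  assumes [measurable]: "h \<in> borel_measurable borel"
    and K: "\<And>s. 0 < s \<Longrightarrow> s \<le> R \<Longrightarrow> norm (K s) \<le> M * s powr (r - 1)" "K 0 = 0"
    and M: "M \<ge> 0" and xR: "x - c \<le> R"
  shows "ennreal (norm (volterra K c h x))
    \<le> ennreal M * (\<integral>\<^sup>+u. ennreal (indicator {c..x} u * norm (h u) * (x - u) powr (r - 1)) \<partial>lborel)"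
proof -
  have "ennreal (norm (volterra K c h x)) \<le> (\<integral>\<^sup>+u. ennreal (norm (indicator {c..x} u *\<^sub>R (K (x - u) * h u))) \<partial>lborel)"
    unfolding volterra_def by (rule ennreal_norm_integral_le)
  also have "\<dots> \<le> (\<integral>\<^sup>+u. ennreal M * ennreal (indicator {c..x} u * norm (h u) * (x - u) powr (r - 1)) \<partial>lborel)"
  proof (intro nn_integral_mono)
    fix u :: real
    consider "u \<in> {c..<x}" | "u = x" | "u \<notin> {c..x}"
      by fastforce
    then show "ennreal (norm (indicator {c..x} u *\<^sub>R (K (x - u) * h u)))
        \<le> ennreal M * ennreal (indicator {c..x} u * norm (h u) * (x - u) powr (r - 1))"
    proof cases
      case 1
      then have "norm (K (x - u)) * norm (h u) \<le> M * (x - u) powr (r - 1) * norm (h u)"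
        using xR by (intro mult_right_mono K(1)) auto
      with 1 M show ?thesis
        by (simp add: indicator_def norm_mult ennreal_mult'[symmetric] mult_ac)
    qed (use K(2) in auto)
  qed
  also have "\<dots> = ennreal M * (\<integral>\<^sup>+u. ennreal (indicator {c..x} u * norm (h u) * (x - u) powr (r - 1)) \<partial>lborel)"
    by (rule nn_integral_cmult) measurable
  finally show ?thesis .
qed

lemma set_integrable_volterra:
  assumes K: "weakly_singular K r (d - c)" and r: "r > 0"
    and [measurable]: "h \<in> borel_measurable borel" and h: "set_integrable lborel {c..d} h"
  shows "set_integrable lborel {c..d} (volterra K c h)"
proof -
  obtain M where [measurable]: "K \<in> borel_measurable borel" and M: "M \<ge> 0" "K 0 = 0"
    "\<And>s. 0 < s \<Longrightarrow> s \<le> d - c \<Longrightarrow> norm (K s) \<le> M * s powr (r - 1)"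
    using K unfolding weakly_singular_def by blast
  have "(\<integral>\<^sup>+x. ennreal (norm (indicator {c..d} x *\<^sub>R volterra K c h x)) \<partial>lborel)
      \<le> (\<integral>\<^sup>+x. ennreal M * (\<integral>\<^sup>+u. ennreal (indicator {c..d} x *
            (indicator {c..x} u * norm (h u) * (x - u) powr (r - 1))) \<partial>lborel) \<partial>lborel)"
  proof (intro nn_integral_mono)
    fix x
    show "ennreal (norm (indicator {c..d} x *\<^sub>R volterra K c h x))
        \<le> ennreal M * (\<integral>\<^sup>+u. ennreal (indicator {c..d} x *
            (indicator {c..x} u * norm (h u) * (x - u) powr (r - 1))) \<partial>lborel)"
      using norm_volterra_le[of h "d - c" K M r x c] M by (cases "x \<in> {c..d}") auto
  qed
  also have "\<dots> = ennreal M * (\<integral>\<^sup>+x. \<integral>\<^sup>+u. ennreal (indicator {c..d} x *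
      (indicator {c..x} u * norm (h u) * (x - u) powr (r - 1))) \<partial>lborel \<partial>lborel)"
    by (rule nn_integral_cmult) measurable
  also have "\<dots> \<le> ennreal M * (ennreal ((d - c) powr r / r) * (\<integral>\<^sup>+u. ennreal (indicator {c..d} u * norm (h u)) \<partial>lborel))"
    by (intro mult_left_mono nn_integral_powr_volterra_le r) auto
  also have "\<dots> < \<infinity>"
    using nn_integral_indicator_norm_less_top[OF h] by (simp add: ennreal_mult_less_top)
  finally show ?thesis
    unfolding set_integrable_def by (intro integrableI_bounded) measurable
qed

text \<open>Tonelli bounds the iterated absolute integrand by an integrable function of \<open>x\<close>, so
  Fubini applies at almost every \<open>x\<close>.\<close>
lemma volterra_compose_AE:
  assumes K\<^sub>1: "weakly_singular K\<^sub>1 r\<^sub>1 (d - c)" and K\<^sub>2: "weakly_singular K\<^sub>2 r\<^sub>2 (d - c)"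
    and r: "r\<^sub>1 > 0" "r\<^sub>2 > 0"
    and conv: "\<And>s. s > 0 \<Longrightarrow> (\<integral>v. indicator {0..s} v *\<^sub>R (K\<^sub>1 (s - v) * K\<^sub>2 v) \<partial>lborel) = K\<^sub>1\<^sub>2 s"
    and "K\<^sub>1\<^sub>2 0 = 0"
    and [measurable]: "h \<in> borel_measurable borel" and h: "set_integrable lborel {c..d} h"
  shows "AE x in lborel. x \<in> {c..d} \<longrightarrow> volterra K\<^sub>1 c (volterra K\<^sub>2 c h) x = volterra K\<^sub>1\<^sub>2 c h x"
proof -
  obtain M\<^sub>1 where [measurable]: "K\<^sub>1 \<in> borel_measurable borel" and M\<^sub>1: "M\<^sub>1 \<ge> 0" "K\<^sub>1 0 = 0"
    "\<And>s. 0 < s \<Longrightarrow> s \<le> d - c \<Longrightarrow> norm (K\<^sub>1 s) \<le> M\<^sub>1 * s powr (r\<^sub>1 - 1)"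
    using K\<^sub>1 unfolding weakly_singular_def by blast
  obtain M\<^sub>2 where [measurable]: "K\<^sub>2 \<in> borel_measurable borel" and M\<^sub>2: "M\<^sub>2 \<ge> 0" "K\<^sub>2 0 = 0"
    "\<And>s. 0 < s \<Longrightarrow> s \<le> d - c \<Longrightarrow> norm (K\<^sub>2 s) \<le> M\<^sub>2 * s powr (r\<^sub>2 - 1)"
    using K\<^sub>2 unfolding weakly_singular_def by blast
  define \<Phi> where "\<Phi> x = (\<integral>\<^sup>+t. \<integral>\<^sup>+u. ennreal (indicator {c..x} t * indicator {c..t} u *
      (norm (K\<^sub>1 (x - t)) * norm (K\<^sub>2 (t - u)) * norm (h u))) \<partial>lborel \<partial>lborel)" for x
  define B where "B = M\<^sub>1 * M\<^sub>2 * Beta r\<^sub>1 r\<^sub>2"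
  have [measurable]: "(\<lambda>x. ennreal (indicator {c..d} x) * \<Phi> x) \<in> borel_measurable lborel"
    unfolding \<Phi>_def by measurable
  have "(\<integral>\<^sup>+x. ennreal (indicator {c..d} x) * \<Phi> x \<partial>lborel)
      \<le> (\<integral>\<^sup>+x. ennreal B * (\<integral>\<^sup>+u. ennreal (indicator {c..d} x *
            (indicator {c..x} u * norm (h u) * (x - u) powr (r\<^sub>1 + r\<^sub>2 - 1))) \<partial>lborel) \<partial>lborel)"
  proof (intro nn_integral_mono)
    fix x
    show "ennreal (indicator {c..d} x) * \<Phi> x \<le> ennreal B * (\<integral>\<^sup>+u. ennreal (indicator {c..d} x *
        (indicator {c..x} u * norm (h u) * (x - u) powr (r\<^sub>1 + r\<^sub>2 - 1))) \<partial>lborel)"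
      using nn_integral_volterra_compose_le[of K\<^sub>1 K\<^sub>2 h "d - c" M\<^sub>1 r\<^sub>1 M\<^sub>2 r\<^sub>2 x c] M\<^sub>1 M\<^sub>2 r
      by (cases "x \<in> {c..d}") (auto simp: \<Phi>_def B_def)
  qed
  also have "\<dots> = ennreal B * (\<integral>\<^sup>+x. \<integral>\<^sup>+u. ennreal (indicator {c..d} x *
      (indicator {c..x} u * norm (h u) * (x - u) powr (r\<^sub>1 + r\<^sub>2 - 1))) \<partial>lborel \<partial>lborel)"
    by (rule nn_integral_cmult) measurable
  also have "\<dots> \<le> ennreal B * (ennreal ((d - c) powr (r\<^sub>1 + r\<^sub>2) / (r\<^sub>1 + r\<^sub>2)) *
      (\<integral>\<^sup>+u. ennreal (indicator {c..d} u * norm (h u)) \<partial>lborel))"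
    using r by (intro mult_left_mono nn_integral_powr_volterra_le) auto
  also have "\<dots> < \<infinity>"
    using nn_integral_indicator_norm_less_top[OF h] by (simp add: ennreal_mult_less_top)
  finally have "AE x in lborel. ennreal (indicator {c..d} x) * \<Phi> x \<noteq> \<infinity>"
    by (intro nn_integral_PInf_AE) auto
  then show ?thesis
  proof (rule eventually_mono, intro impI)
    fix x
    assume "ennreal (indicator {c..d} x) * \<Phi> x \<noteq> \<infinity>" "x \<in> {c..d}"
    then have "\<Phi> x < \<infinity>"
      by (simp add: top.not_eq_extremum)
    then show "volterra K\<^sub>1 c (volterra K\<^sub>2 c h) x = volterra K\<^sub>1\<^sub>2 c h x"
      using M\<^sub>1 M\<^sub>2 assms(6) by (intro volterra_compose_eq conv) (auto simp: \<Phi>_def)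
  qed
qed

section \<open>The Prabhakar integral\<close>

lemma prab_int_eq_volterra: "prab_int \<alpha> \<gamma> \<omega> \<rho> c h = volterra (prab_kernel \<alpha> \<gamma> \<omega> \<rho>) c h"
  unfolding prab_int_def volterra_def set_lebesgue_integral_def
proof (intro ext Bochner_Integration.integral_cong refl)
  fix x t
  show "indicator {c..x} t *\<^sub>R (complex_of_real (x - t) powr (\<gamma> - 1) *
      prab_ML \<alpha> \<gamma> \<rho> (\<omega> * of_real (x - t) powr \<alpha>) * h t) =
    indicator {c..x} t *\<^sub>R (prab_kernel \<alpha> \<gamma> \<omega> \<rho> (x - t) * h t)"
    by (cases "t < x") (auto simp: prab_kernel_def indicator_def)
qed

lemma weakly_singular_prab_kernel:
  assumes "Re \<alpha> > 0" "Re \<gamma> > 0"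
  shows "weakly_singular (prab_kernel \<alpha> \<gamma> \<omega> \<rho>) (Re \<gamma>) R"
proof -
  define M where "M = (\<Sum>n. norm (prab_coeff \<alpha> \<gamma> \<rho> n) * (norm \<omega> * R powr Re \<alpha>) ^ n)"
  have "M \<ge> 0"
    unfolding M_def by (intro suminf_nonneg summable_norm_prab_coeff assms) auto
  moreover have "norm (prab_kernel \<alpha> \<gamma> \<omega> \<rho> s) \<le> M * s powr (Re \<gamma> - 1)" if s: "0 < s" "s \<le> R" for s
  proof -
    have "norm (\<omega> * of_real s powr \<alpha>) \<le> norm \<omega> * R powr Re \<alpha>"
      using s assms by (auto simp: norm_mult intro!: mult_left_mono powr_mono2)
    from norm_prab_ML_le[OF assms this]
    have "norm (prab_ML \<alpha> \<gamma> \<rho> (\<omega> * of_real s powr \<alpha>)) \<le> M"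
      by (simp add: M_def)
    then show ?thesis
      using s by (simp add: prab_kernel_def norm_mult mult_ac mult_left_mono)
  qed
  ultimately show ?thesis
    using assms by (auto simp: weakly_singular_def)
qed

lemma measurable_prab_int [measurable]:
  assumes "Re \<alpha> > 0" "Re \<gamma> > 0" "h \<in> borel_measurable borel"
  shows "prab_int \<alpha> \<gamma> \<omega> \<rho> c h \<in> borel_measurable borel"
  unfolding prab_int_eq_volterra using assms by measurable

lemma set_integrable_prab_int:
  assumes "Re \<alpha> > 0" "Re \<gamma> > 0" "h \<in> borel_measurable borel" "set_integrable lborel {c..d} h"
  shows "set_integrable lborel {c..d} (prab_int \<alpha> \<gamma> \<omega> \<rho> c h)"
  unfolding prab_int_eq_volterra using assms
  by (intro set_integrable_volterra[where r = "Re \<gamma>"] weakly_singular_prab_kernel) auto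

lemma prab_int_cong:
  "(\<And>t. t \<in> {c..x} \<Longrightarrow> h\<^sub>1 t = h\<^sub>2 t) \<Longrightarrow> prab_int \<alpha> \<gamma> \<omega> \<rho> c h\<^sub>1 x = prab_int \<alpha> \<gamma> \<omega> \<rho> c h\<^sub>2 x"
  unfolding prab_int_eq_volterra by (rule volterra_cong)

lemma prab_int_1_0:
  "h \<in> borel_measurable borel \<Longrightarrow> prab_int \<alpha> 1 \<omega> 0 c h x = (LINT t:{c..x}|lborel. h t)"
  unfolding prab_int_eq_volterra by (rule volterra_const_1) (simp_all add: prab_kernel_1_0)

lemma prab_int_semigroup_AE:
  assumes "Re \<alpha> > 0" "Re \<gamma>\<^sub>1 > 0" "Re \<gamma>\<^sub>2 > 0"
    and "h \<in> borel_measurable borel" "set_integrable lborel {c..d} h"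
  shows "AE x in lborel. x \<in> {c..d} \<longrightarrow>
    prab_int \<alpha> \<gamma>\<^sub>1 \<omega> \<rho>\<^sub>1 c (prab_int \<alpha> \<gamma>\<^sub>2 \<omega> \<rho>\<^sub>2 c h) x = prab_int \<alpha> (\<gamma>\<^sub>1 + \<gamma>\<^sub>2) \<omega> (\<rho>\<^sub>1 + \<rho>\<^sub>2) c h x"
  unfolding prab_int_eq_volterra using assms
  by (intro volterra_compose_AE[where r\<^sub>1 = "Re \<gamma>\<^sub>1" and r\<^sub>2 = "Re \<gamma>\<^sub>2"]
      weakly_singular_prab_kernel lborel_integral_prab_kernel_convolution) auto

lemma set_integral_prab_int_semigroup:
  assumes \<alpha>: "Re \<alpha> > 0" and \<gamma>: "Re \<gamma>\<^sub>1 > 0" "Re \<gamma>\<^sub>2 > 0"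
    and [measurable]: "h \<in> borel_measurable borel" "g \<in> borel_measurable borel"
    and "set_integrable lborel {c..d} h"
  shows "(LINT x:{c..d}|lborel. prab_int \<alpha> \<gamma>\<^sub>1 \<omega> \<rho>\<^sub>1 c (prab_int \<alpha> \<gamma>\<^sub>2 \<omega> \<rho>\<^sub>2 c h) x * g x)
       = (LINT x:{c..d}|lborel. prab_int \<alpha> (\<gamma>\<^sub>1 + \<gamma>\<^sub>2) \<omega> (\<rho>\<^sub>1 + \<rho>\<^sub>2) c h x * g x)"
proof (rule set_lebesgue_integral_cong_AE)
  have \<gamma>\<^sub>1\<^sub>2: "Re (\<gamma>\<^sub>1 + \<gamma>\<^sub>2) > 0"
    using \<gamma> by simp
  note measurable_prab_int[OF \<alpha> \<gamma>(2), measurable] measurable_prab_int[OF \<alpha> \<gamma>\<^sub>1\<^sub>2, measurable]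
  note measurable_prab_int[OF \<alpha> \<gamma>(1), measurable]
  show "(\<lambda>x. prab_int \<alpha> \<gamma>\<^sub>1 \<omega> \<rho>\<^sub>1 c (prab_int \<alpha> \<gamma>\<^sub>2 \<omega> \<rho>\<^sub>2 c h) x * g x) \<in> borel_measurable lborel"
    and "(\<lambda>x. prab_int \<alpha> (\<gamma>\<^sub>1 + \<gamma>\<^sub>2) \<omega> (\<rho>\<^sub>1 + \<rho>\<^sub>2) c h x * g x) \<in> borel_measurable lborel"
    by measurable
  show "AE x\<in>{c..d} in lborel. prab_int \<alpha> \<gamma>\<^sub>1 \<omega> \<rho>\<^sub>1 c (prab_int \<alpha> \<gamma>\<^sub>2 \<omega> \<rho>\<^sub>2 c h) x * g x
      = prab_int \<alpha> (\<gamma>\<^sub>1 + \<gamma>\<^sub>2) \<omega> (\<rho>\<^sub>1 + \<rho>\<^sub>2) c h x * g x"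
    using prab_int_semigroup_AE[OF assms(1-4,6), where \<omega> = \<omega> and \<rho>\<^sub>1 = \<rho>\<^sub>1 and \<rho>\<^sub>2 = \<rho>\<^sub>2]
    by eventually_elim simp
qed simp

section \<open>Integration by parts against test functions\<close>

lemma test_function_has_real_derivative:
  "test_function c d \<phi> \<Longrightarrow> ((deriv ^^ k) \<phi> has_real_derivative (deriv ^^ Suc k) \<phi> x) (at x)"
  by (simp add: test_function_def)

lemma continuous_on_test_function_deriv:
  assumes "test_function c d \<phi>"
  shows "continuous_on UNIV ((deriv ^^ k) \<phi>)"
  using test_function_has_real_derivative[OF assms]
  by (intro continuous_at_imp_continuous_on) (auto intro: DERIV_isCont)

lemma borel_measurable_test_function_deriv:
  "test_function c d \<phi> \<Longrightarrow> (deriv ^^ k) \<phi> \<in> borel_measurable borel"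
  by (rule borel_measurable_continuous_onI[OF continuous_on_test_function_deriv])

lemma test_function_deriv_eq_0:
  assumes "test_function c d \<phi>" "x \<ge> d"
  shows "(deriv ^^ k) \<phi> x = 0"
proof -
  obtain b where "b < d" and b: "\<And>x. x > b \<Longrightarrow> \<phi> x = 0"
    using assms(1) unfolding test_function_def by force
  have "(deriv ^^ k) \<phi> x = 0" if "x > b" for x
    using that
  proof (induction k arbitrary: x)
    case (Suc k)
    have "((deriv ^^ k) \<phi> has_field_derivative 0) (at x)"
      by (rule has_field_derivative_transform_within_open[of "\<lambda>_. 0" _ _ "{b<..}"]) (use Suc in auto)
    with test_function_has_real_derivative[OF assms(1), of k x] show ?case
      by (metis DERIV_unique)
  qed (use b in simp)
  with \<open>b < d\<close> assms(2) show ?thesis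
    by simp
qed

lemma integrable_primitive_mult:
  fixes H :: "real \<Rightarrow> complex" and g :: "real \<Rightarrow> real"
  assumes [measurable]: "H \<in> borel_measurable borel" "g \<in> borel_measurable borel"
    and H: "set_integrable lborel {c..d} H" and g: "continuous_on {c..d} g"
  shows "integrable (lborel \<Otimes>\<^sub>M lborel)
    (\<lambda>(x, t). indicator {c..d} x *\<^sub>R (indicator {c..x} t *\<^sub>R H t * complex_of_real (g x)))"
    (is "integrable _ ?G")
proof (rule integrableI_bounded)
  show "?G \<in> borel_measurable (lborel \<Otimes>\<^sub>M lborel)"
    by measurable
  obtain B0 where "\<forall>x\<in>{c..d}. \<bar>g x\<bar> \<le> B0"
    using compact_imp_bounded[OF compact_continuous_image[OF g compact_Icc]] unfolding bounded_real by blast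
  then obtain B where B: "B \<ge> 0" "\<And>x. x \<in> {c..d} \<Longrightarrow> \<bar>g x\<bar> \<le> B"
    by (metis max.cobounded1 max.cobounded2 order_trans)
  have "(\<integral>\<^sup>+p. ennreal (norm (?G p)) \<partial>(lborel \<Otimes>\<^sub>M lborel))
      = (\<integral>\<^sup>+x. \<integral>\<^sup>+t. ennreal (norm (?G (x, t))) \<partial>lborel \<partial>lborel)"
    by (rule lborel.nn_integral_fst[symmetric]) measurable
  also have "\<dots> \<le> (\<integral>\<^sup>+x. \<integral>\<^sup>+t. ennreal (B * indicator {c..d} x) * ennreal (indicator {c..d} t * norm (H t)) \<partial>lborel \<partial>lborel)"
  proof (intro nn_integral_mono)
    fix x t :: real
    show "ennreal (norm (?G (x, t))) \<le> ennreal (B * indicator {c..d} x) * ennreal (indicator {c..d} t * norm (H t))"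
    proof (cases "x \<in> {c..d} \<and> t \<in> {c..x}")
      case True
      then have "norm (H t) * \<bar>g x\<bar> \<le> norm (H t) * B"
        using B by (intro mult_left_mono) auto
      with True B show ?thesis
        by (simp add: norm_mult ennreal_mult'[symmetric] mult_ac)
    qed (auto simp: indicator_def)
  qed
  also have "\<dots> = (\<integral>\<^sup>+x. ennreal (B * indicator {c..d} x) \<partial>lborel) * (\<integral>\<^sup>+t. ennreal (indicator {c..d} t * norm (H t)) \<partial>lborel)"
    by (simp add: nn_integral_cmult nn_integral_multc)
  also have "\<dots> < \<infinity>"
    using B nn_integral_indicator_norm_less_top[OF H]
    by (simp add: ennreal_mult' ennreal_indicator nn_integral_cmult_indicator ennreal_mult_less_top emeasure_lborel_Icc_eq)
  finally show "(\<integral>\<^sup>+p. ennreal (norm (?G p)) \<partial>(lborel \<Otimes>\<^sub>M lborel)) < \<infinity>" .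
qed

lemma set_integral_primitive_mult_deriv:
  fixes H :: "real \<Rightarrow> complex" and g g' :: "real \<Rightarrow> real"
  assumes [measurable]: "H \<in> borel_measurable borel" and H: "set_integrable lborel {c..d} H"
    and g: "\<And>x. (g has_real_derivative g' x) (at x)" "continuous_on UNIV g'" and "g d = 0"
  shows "(LINT x:{c..d}|lborel. (LINT t:{c..x}|lborel. H t) * complex_of_real (g' x))
       = - (LINT x:{c..d}|lborel. H x * complex_of_real (g x))"
proof -
  have "continuous_on UNIV g"
    using g(1) by (intro continuous_at_imp_continuous_on) (auto intro: DERIV_isCont)
  then have [measurable]: "g \<in> borel_measurable borel" "g' \<in> borel_measurable borel"
    using g(2) by (auto intro: borel_measurable_continuous_onI)
  define G where "G = (\<lambda>(x, t). indicator {c..d} x *\<^sub>R (indicator {c..x} t *\<^sub>R H t * complex_of_real (g' x)))"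
  have "integrable (lborel \<Otimes>\<^sub>M lborel) G"
    unfolding G_def using H g(2) by (intro integrable_primitive_mult) (auto intro: continuous_on_subset)
  then have "(\<integral>x. (\<integral>t. G (x, t) \<partial>lborel) \<partial>lborel) = (\<integral>t. (\<integral>x. G (x, t) \<partial>lborel) \<partial>lborel)"
    using lborel_pair.Fubini_integral[of "\<lambda>x t. G (x, t)"] by simp
  moreover have "(\<integral>t. G (x, t) \<partial>lborel) =
      indicator {c..d} x *\<^sub>R ((LINT t:{c..x}|lborel. H t) * complex_of_real (g' x))" for x
    unfolding G_def case_prod_conv set_lebesgue_integral_def
    by (simp only: integral_scaleR_right integral_mult_left_zero)
  moreover have "(\<integral>x. G (x, t) \<partial>lborel) = - (indicator {c..d} t *\<^sub>R (H t * complex_of_real (g t)))" for t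
  proof (cases "t \<in> {c..d}")
    case True
    have "(\<integral>x. G (x, t) \<partial>lborel) = (\<integral>x. H t * complex_of_real (indicator {t..d} x *\<^sub>R g' x) \<partial>lborel)"
      using True by (intro Bochner_Integration.integral_cong refl) (auto simp: G_def indicator_def)
    also have "\<dots> = H t * complex_of_real (\<integral>x. indicator {t..d} x *\<^sub>R g' x \<partial>lborel)"
      by (subst integral_mult_right_zero) (simp only: integral_complex_of_real)
    also have "(\<integral>x. indicator {t..d} x *\<^sub>R g' x \<partial>lborel) = g d - g t"
      using True g(1) by (intro integral_FTC_atLeastAtMost continuous_on_subset[OF g(2)])
        (auto simp: has_real_derivative_iff_has_vector_derivative has_vector_derivative_at_within)
    finally show ?thesis
      using True \<open>g d = 0\<close> by simp
  next
    case False
    then have "(\<lambda>x. G (x, t)) = (\<lambda>x. 0)"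
      by (auto simp: G_def indicator_def fun_eq_iff)
    with False show ?thesis
      by simp
  qed
  ultimately show ?thesis
    by (simp add: set_lebesgue_integral_def integral_minus)
qed

section \<open>Iterated Prabhakar operators\<close>

lemma Re_of_nat_add_gt_0:
  assumes "k \<ge> prab_order \<nu> \<beta>"
  shows "Re (of_nat k + \<nu> * \<beta>) > 0"
proof -
  define y where "y = Re (- (\<nu> * \<beta>))"
  have "real k \<ge> of_int (\<lfloor>y\<rfloor> + 1)"
    using assms unfolding prab_order_def y_def by linarith
  moreover have "of_int (\<lfloor>y\<rfloor> + 1) > y"
    by linarith
  moreover have "Re (of_nat k + \<nu> * \<beta>) = real k - y"
    by (simp add: y_def)
  ultimately show ?thesis
    by linarith
qed

lemma prab_order_add_le:
  assumes "Re (\<nu> * \<beta>) > 0"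
  shows "prab_order (\<mu> + \<nu>) \<beta> \<le> prab_order \<mu> \<beta>"
proof -
  have "Re (- ((\<mu> + \<nu>) * \<beta>)) \<le> Re (- (\<mu> * \<beta>))"
    using assms by (simp add: distrib_right)
  then show ?thesis
    unfolding prab_order_def by (intro nat_mono add_right_mono floor_mono)
qed

lemma prab_iter_cong:
  assumes "\<And>t. t \<in> {c..d} \<Longrightarrow> g t = h t"
  shows "prab_iter \<alpha> \<beta> \<omega> \<rho> c d \<nu> g \<phi> = prab_iter \<alpha> \<beta> \<omega> \<rho> c d \<nu> h \<phi>"
proof -
  define m where "m = prab_order \<nu> \<beta>"
  have "(LINT x:{c..d}|lborel. prab_int \<alpha> (of_nat m + \<nu> * \<beta>) \<omega> (\<nu> * \<rho>) c g x * complex_of_real ((deriv ^^ m) \<phi> x))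
      = (LINT x:{c..d}|lborel. prab_int \<alpha> (of_nat m + \<nu> * \<beta>) \<omega> (\<nu> * \<rho>) c h x * complex_of_real ((deriv ^^ m) \<phi> x))"
    using assms by (intro set_lebesgue_integral_cong) (auto intro!: prab_int_cong)
  then show ?thesis
    by (simp add: prab_iter_def m_def)
qed

text \<open>\<open>E(k + 1 + \<gamma>, \<rho>) = E(1, 0) E(k + \<gamma>, \<rho>)\<close> and \<open>E(1, 0)\<close> is integration from \<open>c\<close>, so one integration
  by parts moves a derivative from the test function onto the operator.\<close>
lemma set_integral_prab_int_deriv_Suc:
  assumes \<alpha>: "Re \<alpha> > 0" and \<gamma>: "Re (of_nat k + \<gamma>) > 0"
    and [measurable]: "f \<in> borel_measurable borel" and f: "set_integrable lborel {c..d} f"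
    and \<phi>: "test_function c d \<phi>"
  shows "(LINT x:{c..d}|lborel. prab_int \<alpha> (of_nat (Suc k) + \<gamma>) \<omega> \<rho> c f x * complex_of_real ((deriv ^^ Suc k) \<phi> x))
       = - (LINT x:{c..d}|lborel. prab_int \<alpha> (of_nat k + \<gamma>) \<omega> \<rho> c f x * complex_of_real ((deriv ^^ k) \<phi> x))"
proof -
  let ?F = "prab_int \<alpha> (of_nat k + \<gamma>) \<omega> \<rho> c f"
  have "(LINT x:{c..d}|lborel. prab_int \<alpha> (of_nat (Suc k) + \<gamma>) \<omega> \<rho> c f x * complex_of_real ((deriv ^^ Suc k) \<phi> x))
      = (LINT x:{c..d}|lborel. prab_int \<alpha> 1 \<omega> 0 c ?F x * complex_of_real ((deriv ^^ Suc k) \<phi> x))"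
  proof -
    note borel_measurable_test_function_deriv[OF \<phi>, measurable]
    have "(\<lambda>x. complex_of_real ((deriv ^^ Suc k) \<phi> x)) \<in> borel_measurable borel"
      by measurable
    from set_integral_prab_int_semigroup[where \<rho>\<^sub>1 = 0 and \<omega> = \<omega> and \<rho>\<^sub>2 = \<rho>, OF \<alpha> _ \<gamma> assms(3) this f]
    show ?thesis
      by (simp add: add_ac)
  qed
  also have "\<dots> = (LINT x:{c..d}|lborel. (LINT t:{c..x}|lborel. ?F t) * complex_of_real ((deriv ^^ Suc k) \<phi> x))"
    by (simp add: prab_int_1_0[OF measurable_prab_int[OF \<alpha> \<gamma> assms(3)]])
  also have "\<dots> = - (LINT x:{c..d}|lborel. ?F x * complex_of_real ((deriv ^^ k) \<phi> x))"
    using \<alpha> \<gamma> f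
    by (intro set_integral_primitive_mult_deriv set_integrable_prab_int measurable_prab_int assms(3)
        test_function_has_real_derivative[OF \<phi>] continuous_on_test_function_deriv[OF \<phi>]
        test_function_deriv_eq_0[OF \<phi> order_refl]) auto
  finally show ?thesis .
qed

lemma prab_iter_eq_higher_order:
  assumes \<alpha>: "Re \<alpha> > 0"
    and "f \<in> borel_measurable borel" "set_integrable lborel {c..d} f" "test_function c d \<phi>"
    and k: "k \<ge> prab_order \<nu> \<beta>"
  shows "prab_iter \<alpha> \<beta> \<omega> \<rho> c d \<nu> f \<phi> = (-1) ^ k *
    (LINT x:{c..d}|lborel. prab_int \<alpha> (of_nat k + \<nu> * \<beta>) \<omega> (\<nu> * \<rho>) c f x * complex_of_real ((deriv ^^ k) \<phi> x))"
  using k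
proof (induction k rule: dec_induct)
  case base
  then show ?case
    by (simp add: prab_iter_def Let_def)
next
  case (step k)
  then show ?case
    using set_integral_prab_int_deriv_Suc[OF \<alpha> Re_of_nat_add_gt_0[OF step(1)] assms(2-4)] by simp
qed

lemma prab_iter_prab_int:
  assumes \<alpha>: "Re \<alpha> > 0" and \<nu>\<beta>: "Re (\<nu> * \<beta>) > 0"
    and f: "f \<in> borel_measurable borel" "set_integrable lborel {c..d} f" and \<phi>: "test_function c d \<phi>"
  shows "prab_iter \<alpha> \<beta> \<omega> \<rho> c d \<mu> (prab_int \<alpha> (\<nu> * \<beta>) \<omega> (\<nu> * \<rho>) c f) \<phi>
       = prab_iter \<alpha> \<beta> \<omega> \<rho> c d (\<mu> + \<nu>) f \<phi>"
proof -
  define m where "m = prab_order \<mu> \<beta>"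
  have \<mu>\<beta>: "Re (of_nat m + \<mu> * \<beta>) > 0"
    unfolding m_def by (rule Re_of_nat_add_gt_0) simp
  have "prab_iter \<alpha> \<beta> \<omega> \<rho> c d \<mu> (prab_int \<alpha> (\<nu> * \<beta>) \<omega> (\<nu> * \<rho>) c f) \<phi>
      = (-1) ^ m * (LINT x:{c..d}|lborel. prab_int \<alpha> (of_nat m + \<mu> * \<beta>) \<omega> (\<mu> * \<rho>) c
          (prab_int \<alpha> (\<nu> * \<beta>) \<omega> (\<nu> * \<rho>) c f) x * complex_of_real ((deriv ^^ m) \<phi> x))"
    by (simp add: prab_iter_def m_def Let_def)
  also have "\<dots> = (-1) ^ m * (LINT x:{c..d}|lborel. prab_int \<alpha> (of_nat m + (\<mu> + \<nu>) * \<beta>) \<omega> ((\<mu> + \<nu>) * \<rho>) c f x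
      * complex_of_real ((deriv ^^ m) \<phi> x))"
    using set_integral_prab_int_semigroup[OF \<alpha> \<mu>\<beta> \<nu>\<beta> f(1) _ f(2)] borel_measurable_test_function_deriv[OF \<phi>]
    by (simp add: algebra_simps)
  also have "\<dots> = prab_iter \<alpha> \<beta> \<omega> \<rho> c d (\<mu> + \<nu>) f \<phi>"
    using prab_order_add_le[OF \<nu>\<beta>, of \<mu>]
    by (intro prab_iter_eq_higher_order[symmetric] \<alpha> f \<phi>) (simp add: m_def)
  finally show ?thesis .
qed

theorem theorem5p3:
  fixes \<alpha> \<beta> \<omega> \<rho> \<mu> \<nu> :: complex and c d :: real
    and f :: "real \<Rightarrow> complex" and \<phi> :: "real \<Rightarrow> real"
  assumes "Re \<alpha> > 0" and "Re \<beta> > 0"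
    and "set_integrable lborel {c..d} f"
    and "Re (\<nu> * \<beta>) > 0"
    and "test_function c d \<phi>"
  shows "prab_iter \<alpha> \<beta> \<omega> \<rho> c d \<mu> (prab_int \<alpha> (\<nu> * \<beta>) \<omega> (\<nu> * \<rho>) c f) \<phi>
       = prab_iter \<alpha> \<beta> \<omega> \<rho> c d (\<mu> + \<nu>) f \<phi>"
proof -
  define f' where "f' = (\<lambda>t. indicator {c..d} t *\<^sub>R f t)"
  have "integrable lborel f'"
    using assms(3) by (simp add: f'_def set_integrable_def)
  moreover have "set_integrable lborel {c..d} f' = set_integrable lborel {c..d} f"
    by (rule set_integrable_cong) (auto simp: f'_def)
  ultimately have f': "f' \<in> borel_measurable borel" "set_integrable lborel {c..d} f'"
    using assms(3) by (simp_all add: borel_measurable_integrable)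
  have "prab_iter \<alpha> \<beta> \<omega> \<rho> c d \<mu> (prab_int \<alpha> (\<nu> * \<beta>) \<omega> (\<nu> * \<rho>) c f) \<phi>
      = prab_iter \<alpha> \<beta> \<omega> \<rho> c d \<mu> (prab_int \<alpha> (\<nu> * \<beta>) \<omega> (\<nu> * \<rho>) c f') \<phi>"
    by (intro prab_iter_cong prab_int_cong) (auto simp: f'_def)
  also have "\<dots> = prab_iter \<alpha> \<beta> \<omega> \<rho> c d (\<mu> + \<nu>) f' \<phi>"
    using assms f' by (intro prab_iter_prab_int)
  also have "\<dots> = prab_iter \<alpha> \<beta> \<omega> \<rho> c d (\<mu> + \<nu>) f \<phi>"
    by (rule prab_iter_cong) (simp add: f'_def)
  finally show ?thesis .
qed

end
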